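(* Let $I\subset S$ be a squarefree monomial ideal generated by monomials of degree at least $2$, and let $k\ge 0$. Then $I$ is $k$-clean if and only if its Alexander dual $I^\vee$ is a $k$-decomposable monomial ideal.
   Context: $S=K[x_1,\dots,x_n]$, $K$ a field. Every such $I$ equals $I_\Delta$ (Stanley–Reisner ideal, generated by $\prod_{i\in F}x_i$ for non-faces $F$) for a simplicial complex $\Delta$ on $[n]$; its Alexander dual is $I^\vee=I_{\Delta^\vee}$ where $\Delta^\vee=\{F\subseteq[n]:[n]\setminus F\notin\Delta\}$. For a monomial $u=x_1^{a_1}\cdots x_n^{a_n}$, $\mathrm{supp}(u)=\{i:a_i>0\}$; $G(I)$ is the minimal monomial generating set. For an ideal $I$, $\min(I)$ is the set of minimal primes of $I$. A monomial $u\neq 1$ with $u\notin I$ is a cleaner monomial of $I$ if $\min(I+Su)\subseteq\min(I)$. For $k\ge 0$, the class of $k$-clean monomial ideals is defined recursively (smallest class closed under the rule): a proper monomial ideal $I$ is $k$-clean if either $I$ is prime, or $I$ has no embedded primes and there is a cleaner monomial $u$ of $I$ with $|\mathrm{supp}(u)|\le k+1$ such that $I:u$ and $I+Su$ are $k$-clean. $k$-decomposable ideals: for monomials $v=\mathbf x^{\mathbf a}$ and $w$, write $[v,w]=1$ if $x_i^{\mathbf a(i)}\nmid w$ for all $i\in\mathrm{supp}(v)$, and $[v,w]\neq1$ otherwise; set $I^v=(w\in G(I):[v,w]\ne 1)$ and $I_v=(w\in G(I):[v,w]=1)$. A monomial $v$ is a shedding monomial of $I$ if $I_v\ne 0$ and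 for each $u_i\in G(I_v)$ and each $l\in\mathrm{supp}(v)$ there exists $u_j\in G(I^v)$ with $u_j:u_i=x_l$. A monomial ideal $I$ is $k$-decomposable (recursively) if $|G(I)|=1$, or $I$ has a shedding monomial $v$ with $|\mathrm{supp}(v)|\le k+1$ such that $I^v$ and $I_v$ are $k$-decomposable. *)

theory Defs
  imports "HOL-Library.Poly_Mapping"
begin

(* The polynomial ring (Defs) S = K[x_v : v in V] with V a finite type of variables
  (so n = CARD('v)). *)

type_synonym ('v, 'a) mpoly = "('v \<Rightarrow>\<^sub>0 nat) \<Rightarrow>\<^sub>0 'a"

definition xmon :: "('v \<Rightarrow>\<^sub>0 nat) \<Rightarrow> ('v, 'a::comm_ring_1) mpoly" where
  "xmon a = Poly_Mapping.single a 1"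

definition var :: "'v \<Rightarrow> 'v \<Rightarrow>\<^sub>0 nat" where
  "var i = Poly_Mapping.single i 1"

definition mdvd :: "('v \<Rightarrow>\<^sub>0 nat) \<Rightarrow> ('v \<Rightarrow>\<^sub>0 nat) \<Rightarrow> bool" where
  "mdvd b a \<longleftrightarrow> (\<forall>i. Poly_Mapping.lookup b i \<le> Poly_Mapping.lookup a i)"

definition supp :: "('v \<Rightarrow>\<^sub>0 nat) \<Rightarrow> 'v set" where
  "supp a = Poly_Mapping.keys a"

definition mdeg :: "('v \<Rightarrow>\<^sub>0 nat) \<Rightarrow> nat" where
  "mdeg a = (\<Sum>i\<in>Poly_Mapping.keys a. Poly_Mapping.lookup a i)"

definition squarefree_mon :: "('v \<Rightarrow>\<^sub>0 nat) \<Rightarrow> bool" where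
  "squarefree_mon a \<longleftrightarrow> (\<forall>i. Poly_Mapping.lookup a i \<le> 1)"

definition is_ideal :: "'r::comm_ring_1 set \<Rightarrow> bool" where
  "is_ideal I \<longleftrightarrow> 0 \<in> I \<and> (\<forall>x\<in>I. \<forall>y\<in>I. x + y \<in> I) \<and> (\<forall>r. \<forall>x\<in>I. r * x \<in> I)"

definition ideal_gen :: "'r::comm_ring_1 set \<Rightarrow> 'r set" where
  "ideal_gen G = \<Inter>{J. is_ideal J \<and> G \<subseteq> J}"

definition colon :: "'r::comm_ring_1 set \<Rightarrow> 'r \<Rightarrow> 'r set" where
  "colon I f = {r. r * f \<in> I}"

definition prime_ideal :: "'r::comm_ring_1 set \<Rightarrow> bool" where
  "prime_ideal P \<longleftrightarrow> is_ideal P \<and> P \<noteq> UNIV \<and> (\<forall>a b. a * b \<in> P \<longrightarrow> a \<in> P \<or> b \<in> P)"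

definition min_primes :: "'r::comm_ring_1 set \<Rightarrow> 'r set set" where
  "min_primes I = {P. prime_ideal P \<and> I \<subseteq> P \<and>
      (\<forall>Q. prime_ideal Q \<and> I \<subseteq> Q \<and> Q \<subseteq> P \<longrightarrow> Q = P)}"

text \<open>Associated primes (Noetherian ring): primes of the form I : f\<close>
definition ass_primes :: "'r::comm_ring_1 set \<Rightarrow> 'r set set" where
  "ass_primes I = {P. prime_ideal P \<and> (\<exists>f. P = colon I f)}"

definition no_embedded_primes :: "'r::comm_ring_1 set \<Rightarrow> bool" where
  "no_embedded_primes I \<longleftrightarrow> ass_primes I \<subseteq> min_primes I"

definition monomial_ideal :: "('v, 'a::comm_ring_1) mpoly set \<Rightarrow> bool" where
  "monomial_ideal I \<longleftrightarrow> (\<exists>G. I = ideal_gen (xmon ` G))"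

definition mingens :: "('v, 'a::comm_ring_1) mpoly set \<Rightarrow> ('v \<Rightarrow>\<^sub>0 nat) set" where
  "mingens I = {a. xmon a \<in> I \<and> (\<forall>b. xmon b \<in> I \<and> mdvd b a \<longrightarrow> b = a)}"

definition sqmon :: "'v set \<Rightarrow> 'v \<Rightarrow>\<^sub>0 nat" where
  "sqmon F = (\<Sum>i\<in>F. var i)"

definition SR_ideal :: "'v set set \<Rightarrow> ('v, 'a::comm_ring_1) mpoly set" where
  "SR_ideal \<Delta> = ideal_gen {xmon (sqmon F) | F. F \<notin> \<Delta>}"

text \<open>the simplicial complex Delta with I = I_Delta (for squarefree I)\<close>
definition SR_complex :: "('v, 'a::comm_ring_1) mpoly set \<Rightarrow> 'v set set" where
  "SR_complex I = {F. xmon (sqmon F) \<notin> I}"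

definition alex_dual_complex :: "'v set set \<Rightarrow> 'v set set" where
  "alex_dual_complex \<Delta> = {F. (UNIV - F) \<notin> \<Delta>}"

definition alexander_dual :: "('v::finite, 'a::comm_ring_1) mpoly set \<Rightarrow> ('v, 'a) mpoly set" where
  "alexander_dual I = SR_ideal (alex_dual_complex (SR_complex I))"

definition cleaner :: "('v, 'a::comm_ring_1) mpoly set \<Rightarrow> ('v \<Rightarrow>\<^sub>0 nat) \<Rightarrow> bool" where
  "cleaner I u \<longleftrightarrow> u \<noteq> 0 \<and> xmon u \<notin> I \<and>
     min_primes (ideal_gen (insert (xmon u) I)) \<subseteq> min_primes I"

inductive k_clean :: "nat \<Rightarrow> ('v, 'a::comm_ring_1) mpoly set \<Rightarrow> bool" for k where
  prime: "monomial_ideal I \<Longrightarrow> I \<noteq> UNIV \<Longrightarrow> prime_ideal I \<Longrightarrow> k_clean k I"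
| step: "monomial_ideal I \<Longrightarrow> I \<noteq> UNIV \<Longrightarrow> no_embedded_primes I \<Longrightarrow> cleaner I u \<Longrightarrow>
         card (supp u) \<le> k + 1 \<Longrightarrow> k_clean k (colon I (xmon u)) \<Longrightarrow>
         k_clean k (ideal_gen (insert (xmon u) I)) \<Longrightarrow> k_clean k I"

definition bracket_one :: "('v \<Rightarrow>\<^sub>0 nat) \<Rightarrow> ('v \<Rightarrow>\<^sub>0 nat) \<Rightarrow> bool" where
  "bracket_one v w \<longleftrightarrow> (\<forall>i\<in>supp v. \<not> mdvd (Poly_Mapping.single i (Poly_Mapping.lookup v i)) w)"

definition upper_part :: "('v, 'a::comm_ring_1) mpoly set \<Rightarrow> ('v \<Rightarrow>\<^sub>0 nat) \<Rightarrow> ('v, 'a) mpoly set" where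
  "upper_part I v = ideal_gen (xmon ` {w\<in>mingens I. \<not> bracket_one v w})"

definition lower_part :: "('v, 'a::comm_ring_1) mpoly set \<Rightarrow> ('v \<Rightarrow>\<^sub>0 nat) \<Rightarrow> ('v, 'a) mpoly set" where
  "lower_part I v = ideal_gen (xmon ` {w\<in>mingens I. bracket_one v w})"

text \<open>monomial colon u : w = u / gcd(u,w), as exponent vectors\<close>
definition mon_colon :: "('v \<Rightarrow>\<^sub>0 nat) \<Rightarrow> ('v \<Rightarrow>\<^sub>0 nat) \<Rightarrow> 'v \<Rightarrow>\<^sub>0 nat" where
  "mon_colon u w = u - w"

definition shedding :: "('v, 'a::comm_ring_1) mpoly set \<Rightarrow> ('v \<Rightarrow>\<^sub>0 nat) \<Rightarrow> bool" where
  "shedding I v \<longleftrightarrow> lower_part I v \<noteq> {0} \<and>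
     (\<forall>ui\<in>mingens (lower_part I v). \<forall>l\<in>supp v.
        \<exists>uj\<in>mingens (upper_part I v). mon_colon uj ui = var l)"

inductive k_decomposable :: "nat \<Rightarrow> ('v, 'a::comm_ring_1) mpoly set \<Rightarrow> bool" for k where
  single: "monomial_ideal I \<Longrightarrow> card (mingens I) = 1 \<Longrightarrow> k_decomposable k I"
| step: "monomial_ideal I \<Longrightarrow> shedding I v \<Longrightarrow> card (supp v) \<le> k + 1 \<Longrightarrow>
         k_decomposable k (upper_part I v) \<Longrightarrow> k_decomposable k (lower_part I v) \<Longrightarrow>
         k_decomposable k I"

end

theory Submission
  imports Defs
begin

text \<open>
  A squarefree monomial ideal is the Stanley--Reisner ideal \<open>I\<^sub>\<Delta>\<close> of its complex \<open>\<Delta>\<close>, and its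
  minimal primes are the ideals \<open>(x\<^sub>i : i \<notin> F)\<close> for the facets \<open>F\<close> of \<open>\<Delta>\<close>; \<open>I\<^sub>\<Delta>\<close> has no
  embedded primes. Adding \<open>x\<^sub>\<sigma>\<close> gives the ideal of the deletion of \<open>\<sigma>\<close> and the colon by \<open>x\<^sub>\<sigma>\<close>
  the ideal of its star, so \<open>x\<^sub>\<sigma>\<close> is a cleaner monomial exactly when \<open>\<sigma>\<close> is a shedding face
  (every facet of the deletion is a facet of \<open>\<Delta>\<close>). Hence \<open>I\<^sub>\<Delta>\<close> is k-clean iff \<open>\<Delta>\<close> is
  k-decomposable; for the non-squarefree ideals met along a cleaning one works with the
  complex of the radical, whose stars at \<open>supp u\<close> do not see the difference.

  Dually, \<open>I\<^sub>\<Delta>\<^sup>\<or>\<close> is minimally generated by the \<open>x\<^bsub>[n] - F\<^esub>\<close> for facets \<open>F\<close>. For \<open>v = x\<^sub>\<sigma>\<close>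
  the split of these generators by \<open>[v, w]\<close> is the split of the facets into those containing
  \<open>\<sigma>\<close> and the others, i.e. the generators of the duals of the star and of the deletion, and
  the shedding-monomial condition says that for every facet \<open>F \<supseteq> \<sigma>\<close> and \<open>l \<in> \<sigma>\<close> there is a
  facet \<open>G\<close> not containing \<open>\<sigma>\<close> with \<open>F - G = {l}\<close>, an exchange property equivalent to \<open>\<sigma>\<close> being a
  shedding face.
\<close>

abbreviation keys where "keys \<equiv> Poly_Mapping.keys"
abbreviation lookup where "lookup \<equiv> Poly_Mapping.lookup"

section \<open>Monomial ideals\<close>

lemma ideal_ideal_gen: "is_ideal (ideal_gen G)"
  unfolding ideal_gen_def is_ideal_def by auto

lemma ideal_gen_subset: "G \<subseteq> ideal_gen G"
  unfolding ideal_gen_def by auto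

lemma ideal_gen_minimal: "is_ideal J \<Longrightarrow> G \<subseteq> J \<Longrightarrow> ideal_gen G \<subseteq> J"
  unfolding ideal_gen_def by auto

lemma ideal_add: "is_ideal J \<Longrightarrow> x \<in> J \<Longrightarrow> y \<in> J \<Longrightarrow> x + y \<in> J"
  by (simp add: is_ideal_def)

lemma ideal_mult_left: "is_ideal J \<Longrightarrow> x \<in> J \<Longrightarrow> r * x \<in> J"
  by (simp add: is_ideal_def)

lemma ideal_mult_right: "is_ideal J \<Longrightarrow> x \<in> J \<Longrightarrow> x * r \<in> J"
  by (metis ideal_mult_left mult.commute)

lemma ideal_diff: "is_ideal J \<Longrightarrow> x \<in> J \<Longrightarrow> y \<in> J \<Longrightarrow> x - y \<in> J"
  using ideal_add[of J x "- y"] ideal_mult_left[of J y "- 1"] by simp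

lemma ideal_sum: "is_ideal J \<Longrightarrow> (\<And>x. x \<in> A \<Longrightarrow> f x \<in> J) \<Longrightarrow> sum f A \<in> J"
  by (induction A rule: infinite_finite_induct) (auto simp: is_ideal_def)

lemma ideal_gen_empty: "ideal_gen {} = {0}"
proof
  show "ideal_gen {} \<subseteq> {0}"
    by (rule ideal_gen_minimal) (auto simp: is_ideal_def)
  show "{0} \<subseteq> ideal_gen {}"
    using ideal_ideal_gen[of "{}"] unfolding is_ideal_def by blast
qed

lemma ideal_gen_insert_ideal_gen: "ideal_gen (insert x (ideal_gen S)) = ideal_gen (insert x S)"
proof
  have "ideal_gen S \<subseteq> ideal_gen (insert x S)"
    by (rule ideal_gen_minimal[OF ideal_ideal_gen]) (use ideal_gen_subset in blast)
  then show "ideal_gen (insert x (ideal_gen S)) \<subseteq> ideal_gen (insert x S)"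
    by (intro ideal_gen_minimal[OF ideal_ideal_gen]) (use ideal_gen_subset in blast)
  show "ideal_gen (insert x S) \<subseteq> ideal_gen (insert x (ideal_gen S))"
    by (intro ideal_gen_minimal[OF ideal_ideal_gen])
      (use ideal_gen_subset[of S] ideal_gen_subset[of "insert x (ideal_gen S)"] in blast)
qed

lemma xmon_add: "xmon (a + b) = (xmon a * xmon b :: ('v, 'a::comm_ring_1) mpoly)"
  by (simp add: xmon_def mult_single)

lemma xmon_0: "(xmon 0 :: ('v, 'a::comm_ring_1) mpoly) = 1"
  by (simp add: xmon_def one_poly_mapping.abs_eq Poly_Mapping.single.abs_eq when_def)

lemma keys_xmon [simp]: "keys (xmon a :: ('v, 'a::comm_ring_1) mpoly) = {a}"
  by (simp add: xmon_def)

lemma xmon_neq_0 [simp]: "(xmon a :: ('v, 'a::comm_ring_1) mpoly) \<noteq> 0"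
  by (metis keys_xmon keys_zero empty_not_insert)

lemma keys_add_nat: "keys ((a :: 'v \<Rightarrow>\<^sub>0 nat) + b) = keys a \<union> keys b"
  by (auto simp: in_keys_iff lookup_add)

lemma mdvd_refl [simp]: "mdvd a a"
  by (simp add: mdvd_def)

lemma mdvd_trans: "mdvd a b \<Longrightarrow> mdvd b c \<Longrightarrow> mdvd a c"
  by (auto simp: mdvd_def intro: order_trans)

lemma mdvd_antisym: "mdvd a b \<Longrightarrow> mdvd b a \<Longrightarrow> a = b"
  by (auto simp: mdvd_def intro!: poly_mapping_eqI intro: antisym)

lemma mdvd_add_left: "mdvd g b \<Longrightarrow> mdvd g (a + b)"
  by (auto simp: mdvd_def lookup_add intro: le_add2 order_trans)

lemma mdvd_diff_add: "mdvd g a \<Longrightarrow> a - g + g = a"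
  by (auto simp: mdvd_def intro!: poly_mapping_eqI simp: lookup_add lookup_minus)

lemma mdvd_keys_subset: "mdvd g a \<Longrightarrow> keys g \<subseteq> keys a"
  by (auto simp: mdvd_def in_keys_iff) (use less_le_trans in blast)

lemma mdvd_single_iff: "mdvd (Poly_Mapping.single i c) w \<longleftrightarrow> c \<le> lookup w i"
  by (auto simp: mdvd_def lookup_single when_def)

lemma mpoly_eq_sum_single:
  "(f :: ('v, 'a::comm_ring_1) mpoly) = (\<Sum>a\<in>keys f. Poly_Mapping.single a (lookup f a))"
proof (rule poly_mapping_eqI)
  fix b
  have "(\<Sum>a\<in>keys f. lookup f a when a = b) = lookup f b"
    by (cases "b \<in> keys f") (auto simp: when_def in_keys_iff sum.delta')
  then show "lookup f b = lookup (\<Sum>a\<in>keys f. Poly_Mapping.single a (lookup f a)) b"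
    by (simp add: lookup_sum lookup_single)
qed

lemma monomial_ideal_mem_iff:
  "(f :: ('v, 'a::comm_ring_1) mpoly) \<in> ideal_gen (xmon ` G) \<longleftrightarrow> (\<forall>a\<in>keys f. \<exists>g\<in>G. mdvd g a)"
proof
  let ?J = "{f :: ('v, 'a) mpoly. \<forall>a\<in>keys f. \<exists>g\<in>G. mdvd g a}"
  have "is_ideal ?J"
    unfolding is_ideal_def
  proof (intro conjI ballI allI)
    show "x + y \<in> ?J" if "x \<in> ?J" "y \<in> ?J" for x y
      using that keys_add[of x y] by blast
    show "r * x \<in> ?J" if "x \<in> ?J" for r x
      using that keys_mult[of r x] mdvd_add_left by blast
  qed simp
  moreover have "xmon ` G \<subseteq> ?J"
    using mdvd_refl by fastforce
  ultimately have "ideal_gen (xmon ` G) \<subseteq> ?J"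
    by (rule ideal_gen_minimal)
  then show "f \<in> ideal_gen (xmon ` G) \<Longrightarrow> \<forall>a\<in>keys f. \<exists>g\<in>G. mdvd g a"
    by blast
next
  assume f: "\<forall>a\<in>keys f. \<exists>g\<in>G. mdvd g a"
  have "Poly_Mapping.single a (lookup f a) \<in> ideal_gen (xmon ` G)" if a: "a \<in> keys f" for a
  proof -
    obtain g where g: "g \<in> G" "mdvd g a"
      using f a by blast
    have "Poly_Mapping.single a (lookup f a) = Poly_Mapping.single (a - g) (lookup f a) * xmon g"
      by (simp add: xmon_def mult_single mdvd_diff_add[OF g(2)])
    moreover have "(xmon g :: ('v, 'a) mpoly) \<in> ideal_gen (xmon ` G)"
      using g(1) ideal_gen_subset by blast
    ultimately show ?thesis
      by (simp add: ideal_mult_left[OF ideal_ideal_gen])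
  qed
  then have "(\<Sum>a\<in>keys f. Poly_Mapping.single a (lookup f a)) \<in> ideal_gen (xmon ` G)"
    by (rule ideal_sum[OF ideal_ideal_gen])
  then show "f \<in> ideal_gen (xmon ` G)"
    by (simp flip: mpoly_eq_sum_single)
qed

lemma xmon_mem_monomial_ideal_iff:
  "(xmon a :: ('v, 'a::comm_ring_1) mpoly) \<in> ideal_gen (xmon ` G) \<longleftrightarrow> (\<exists>g\<in>G. mdvd g a)"
  by (simp add: monomial_ideal_mem_iff)

lemma monomial_ideal_mem_iff_xmon:
  "(f :: ('v, 'a::comm_ring_1) mpoly) \<in> ideal_gen (xmon ` G)
     \<longleftrightarrow> (\<forall>a\<in>keys f. (xmon a :: ('v, 'a) mpoly) \<in> ideal_gen (xmon ` G))"
  by (simp add: monomial_ideal_mem_iff)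

lemma ideal_gen_xmon_eq_0_iff: "(ideal_gen (xmon ` M) :: ('v, 'a::comm_ring_1) mpoly set) = {0} \<longleftrightarrow> M = {}"
proof
  assume "(ideal_gen (xmon ` M) :: ('v, 'a) mpoly set) = {0}"
  moreover have "(xmon ` M :: ('v, 'a) mpoly set) \<subseteq> ideal_gen (xmon ` M)"
    by (rule ideal_gen_subset)
  ultimately show "M = {}"
    by auto
qed (simp add: ideal_gen_empty)

lemma xmon_mem_ideal_gen: "m \<in> M \<Longrightarrow> (xmon m :: ('v, 'a::comm_ring_1) mpoly) \<in> ideal_gen (xmon ` M)"
  by (simp add: ideal_gen_subset[THEN subsetD])

lemma keys_mult_xmon: "keys ((f :: ('v, 'a::comm_ring_1) mpoly) * xmon u) = (\<lambda>a. a + u) ` keys f"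
proof -
  have "f * xmon u = (\<Sum>a\<in>keys f. Poly_Mapping.single (a + u) (lookup f a))"
    by (subst mpoly_eq_sum_single) (simp add: sum_distrib_right xmon_def mult_single)
  then have "lookup (f * xmon u) (b + u) = lookup f b" for b
    by (simp add: lookup_sum lookup_single when_def sum.delta' in_keys_iff)
  moreover have "keys (f * xmon u) \<subseteq> (\<lambda>a. a + u) ` keys f"
    using keys_mult[of f "xmon u"] by auto
  ultimately show ?thesis
    by (auto simp: in_keys_iff)
qed

section \<open>Primes generated by variables\<close>

lemma exponent_embedding:
  obtains h :: "('v::finite \<Rightarrow>\<^sub>0 nat) \<Rightarrow> nat \<Rightarrow>\<^sub>0 nat"
  where "\<And>a b. h (a + b) = h a + h b" "inj h"
proof -
  obtain e :: "'v \<Rightarrow> nat" where e: "inj e"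
    using finite_imp_inj_to_nat_seg[of "UNIV :: 'v set"] by auto
  define h :: "('v \<Rightarrow>\<^sub>0 nat) \<Rightarrow> nat \<Rightarrow>\<^sub>0 nat" where
    "h a = (\<Sum>v\<in>UNIV. Poly_Mapping.single (e v) (lookup a v))" for a
  have "h (a + b) = h a + h b" for a b
    by (simp add: h_def lookup_add single_add sum.distrib)
  moreover have "lookup (h a) (e v) = lookup a v" for a v
    using e by (simp add: h_def lookup_sum lookup_single when_def inj_eq sum.delta)
  then have "inj h"
    by (metis injI poly_mapping_eqI)
  ultimately show ?thesis
    using that by blast
qed

text \<open>Order the exponents through the embedding into the linearly ordered monoid
  \<open>nat \<Rightarrow>\<^sub>0 nat\<close>: the product of the two lowest terms cannot cancel.\<close>

lemma mpoly_mult_neq_0: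
  fixes f g :: "('v::finite, 'a::idom) mpoly"
  assumes "f \<noteq> 0" "g \<noteq> 0"
  shows "f * g \<noteq> 0"
proof -
  obtain h :: "('v \<Rightarrow>\<^sub>0 nat) \<Rightarrow> nat \<Rightarrow>\<^sub>0 nat" where h: "\<And>a b. h (a + b) = h a + h b" "inj h"
    using exponent_embedding by blast
  obtain a0 where a0: "a0 \<in> keys f" "\<And>a. a \<in> keys f \<Longrightarrow> h a0 \<le> h a"
    using ex_is_arg_min_if_finite[of "keys f" h] assms(1) by (auto simp: is_arg_min_linorder)
  obtain b0 where b0: "b0 \<in> keys g" "\<And>b. b \<in> keys g \<Longrightarrow> h b0 \<le> h b"
    using ex_is_arg_min_if_finite[of "keys g" h] assms(2) by (auto simp: is_arg_min_linorder)
  have unique: "a = a0 \<and> b = b0" if "a \<in> keys f" "b \<in> keys g" "a + b = a0 + b0" for a b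
  proof -
    have "h a + h b = h a0 + h b0"
      using that(3) h(1) by metis
    then have "h a = h a0"
      using a0(2)[OF that(1)] b0(2)[OF that(2)] by (metis add_less_le_mono order_less_le)
    then have "a = a0"
      by (rule injD[OF h(2)])
    then show ?thesis
      using that(3) by simp
  qed
  have "f * g = (\<Sum>a\<in>keys f. \<Sum>b\<in>keys g.
      Poly_Mapping.single (a + b) (lookup f a * lookup g b))"
    by (subst (1 2) mpoly_eq_sum_single) (simp add: sum_product mult_single)
  then have "lookup (f * g) (a0 + b0)
      = (\<Sum>a\<in>keys f. \<Sum>b\<in>keys g. lookup f a * lookup g b when (a, b) = (a0, b0))"
    using unique by (auto simp: lookup_sum lookup_single when_def intro!: sum.cong)
  also have "\<dots> = (\<Sum>a\<in>keys f. if a = a0 then lookup f a0 * lookup g b0 else 0)"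
    by (rule sum.cong) (use b0(1) in \<open>auto simp: when_def sum.delta\<close>)
  also have "\<dots> = lookup f a0 * lookup g b0"
    using a0(1) by (simp add: sum.delta)
  also have "\<dots> \<noteq> 0"
    using a0(1) b0(1) by (simp add: in_keys_iff)
  finally show ?thesis
    by auto
qed

lemma prime_ideal_one_notin: "prime_ideal P \<Longrightarrow> 1 \<notin> P"
  unfolding prime_ideal_def is_ideal_def by (metis UNIV_eq_I mult.right_neutral)

lemma prime_ideal_prod_mem:
  assumes "prime_ideal P" "finite S" "prod c S \<in> P"
  shows "\<exists>x\<in>S. c x \<in> P"
  using assms(2,3)
proof (induction S rule: finite_induct)
  case empty
  then show ?case
    using prime_ideal_one_notin[OF assms(1)] by simp
next
  case (insert x S)
  then show ?case
    using assms(1) by (auto simp: prime_ideal_def)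
qed

definition var_prime :: "'v set \<Rightarrow> ('v, 'a::comm_ring_1) mpoly set" where
  "var_prime A = ideal_gen (xmon ` var ` A)"

lemma ideal_var_prime: "is_ideal (var_prime A)"
  by (simp add: var_prime_def ideal_ideal_gen)

lemma keys_var [simp]: "keys (var i) = {i}"
  by (simp add: var_def)

lemma mdvd_var_iff: "mdvd (var i) a \<longleftrightarrow> i \<in> keys a"
  by (auto simp: mdvd_def var_def lookup_single when_def in_keys_iff Suc_le_eq)

lemma var_prime_mem_iff:
  "(f :: ('v, 'a::comm_ring_1) mpoly) \<in> var_prime A \<longleftrightarrow> (\<forall>a\<in>keys f. keys a \<inter> A \<noteq> {})"
  by (auto simp: var_prime_def monomial_ideal_mem_iff mdvd_var_iff)

lemma xmon_mem_var_prime_iff: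
  "(xmon a :: ('v, 'a::comm_ring_1) mpoly) \<in> var_prime A \<longleftrightarrow> keys a \<inter> A \<noteq> {}"
  by (simp add: var_prime_mem_iff)

lemma var_prime_mono: "A \<subseteq> B \<Longrightarrow> (var_prime A :: ('v, 'a::comm_ring_1) mpoly set) \<subseteq> var_prime B"
  by (fastforce simp: var_prime_mem_iff)

lemma var_prime_inj: "(var_prime A :: ('v, 'a::comm_ring_1) mpoly set) = var_prime B \<Longrightarrow> A = B"
  using xmon_mem_var_prime_iff[of "var _" A, where 'a='a] xmon_mem_var_prime_iff[of "var _" B, where 'a='a]
  by auto

text \<open>A polynomial lies in \<open>var_prime A\<close> iff its part free of the variables in \<open>A\<close>
  vanishes; the product of two nonzero such parts is nonzero.\<close>

lemma prime_var_prime: "prime_ideal (var_prime A :: ('v::finite, 'a::idom) mpoly set)"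
  unfolding prime_ideal_def
proof (intro conjI allI impI)
  let ?P = "var_prime A :: ('v, 'a) mpoly set"
  show ideal: "is_ideal ?P"
    by (rule ideal_var_prime)
  show "?P \<noteq> UNIV"
    using xmon_mem_var_prime_iff[of 0 A, where 'a='a] by auto
  fix a b :: "('v, 'a) mpoly"
  assume ab: "a * b \<in> ?P"
  define free where "free p = (\<Sum>m\<in>{m\<in>keys p. keys m \<inter> A = {}}. Poly_Mapping.single m (lookup p m))"
    for p :: "('v, 'a) mpoly"
  have split: "p - free p \<in> ?P" "keys (free p) = {m\<in>keys p. keys m \<inter> A = {}}" for p
  proof -
    have lookup_free: "lookup (free p) m = (if keys m \<inter> A = {} then lookup p m else 0)" for m
      by (auto simp: free_def lookup_sum lookup_single when_def sum.delta' in_keys_iff)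
    then show "keys (free p) = {m\<in>keys p. keys m \<inter> A = {}}"
      unfolding set_eq_iff in_keys_iff[of _ "free p"] in_keys_iff[of _ p] by simp
    show "p - free p \<in> ?P"
      unfolding var_prime_mem_iff by (auto simp: in_keys_iff lookup_minus lookup_free)
  qed
  have "free a * free b \<in> ?P"
  proof -
    have "free a * free b = a * b - (a - free a) * b - free a * (b - free b)"
      by (simp add: algebra_simps)
    then show ?thesis
      using ab split(1) ideal by (simp add: ideal_diff ideal_mult_left ideal_mult_right)
  qed
  moreover have "keys m \<inter> A = {}" if "m \<in> keys (free a * free b)" for m
    using that keys_mult[of "free a" "free b"] split(2) by (fastforce simp: keys_add_nat)
  ultimately have "free a * free b = 0"
    by (auto simp: var_prime_mem_iff)
  then have "free a = 0 \<or> free b = 0"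
    using mpoly_mult_neq_0 by blast
  then show "a \<in> ?P \<or> b \<in> ?P"
    using split(1)[of a] split(1)[of b] by auto
qed

lemma prime_ideal_xmon_mem:
  assumes "prime_ideal (Q :: ('v::finite, 'a::comm_ring_1) mpoly set)" "xmon a \<in> Q"
  shows "\<exists>i\<in>keys a. xmon (var i) \<in> Q"
  using assms(2)
proof (induction "\<Sum>v\<in>UNIV. lookup a v" arbitrary: a)
  case 0
  then have "a = 0"
    by (auto intro!: poly_mapping_eqI)
  then show ?case
    using 0 prime_ideal_one_notin[OF assms(1)] by (simp add: xmon_0)
next
  case (Suc n)
  then have "a \<noteq> 0"
    by auto
  then obtain i where i: "i \<in> keys a"
    by (meson ex_in_conv keys_eq_empty)
  define b where "b = a - var i"
  have a: "a = b + var i"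
    using i by (simp add: b_def mdvd_diff_add mdvd_var_iff)
  have "n = (\<Sum>v\<in>UNIV. lookup b v)"
    using Suc.hyps(2) by (simp add: a lookup_add sum.distrib var_def lookup_single when_def)
  moreover have "xmon b \<in> Q \<or> xmon (var i) \<in> Q"
    using Suc.prems assms(1) by (simp add: a xmon_add prime_ideal_def)
  moreover have "keys b \<subseteq> keys a"
    by (auto simp: a keys_add_nat)
  ultimately show ?case
    using Suc.hyps(1) i by blast
qed

section \<open>Shedding faces and k-decomposable complexes\<close>

definition down_closed :: "'v set set \<Rightarrow> bool" where
  "down_closed \<Delta> \<longleftrightarrow> (\<forall>F\<in>\<Delta>. \<forall>G. G \<subseteq> F \<longrightarrow> G \<in> \<Delta>)"

definition simplicial_complex :: "'v set set \<Rightarrow> bool" where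
  "simplicial_complex \<Delta> \<longleftrightarrow> {} \<in> \<Delta> \<and> down_closed \<Delta>"

definition facets :: "'v set set \<Rightarrow> 'v set set" where
  "facets \<Delta> = {F\<in>\<Delta>. \<forall>G\<in>\<Delta>. F \<subseteq> G \<longrightarrow> G = F}"

definition star :: "'v set set \<Rightarrow> 'v set \<Rightarrow> 'v set set" where
  "star \<Delta> \<sigma> = {F. F \<union> \<sigma> \<in> \<Delta>}"

definition deletion :: "'v set set \<Rightarrow> 'v set \<Rightarrow> 'v set set" where
  "deletion \<Delta> \<sigma> = {F\<in>\<Delta>. \<not> \<sigma> \<subseteq> F}"

definition shedding_face :: "'v set set \<Rightarrow> 'v set \<Rightarrow> bool" where
  "shedding_face \<Delta> \<sigma> \<longleftrightarrow> facets (deletion \<Delta> \<sigma>) \<subseteq> facets \<Delta>"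

text \<open>The usual definition recurses on the link of \<open>\<sigma>\<close>; we recurse on the star
  \<open>\<sigma> * lk \<sigma>\<close> instead, which is what colon ideals by \<open>x\<^sub>\<sigma>\<close> produce.\<close>

inductive k_decomposable_complex :: "nat \<Rightarrow> 'v set set \<Rightarrow> bool" for k where
  simplex: "k_decomposable_complex k (Pow W)"
| step: "\<sigma> \<in> \<Delta> \<Longrightarrow> \<sigma> \<noteq> {} \<Longrightarrow> card \<sigma> \<le> k + 1 \<Longrightarrow> shedding_face \<Delta> \<sigma> \<Longrightarrow>
    k_decomposable_complex k (star \<Delta> \<sigma>) \<Longrightarrow> k_decomposable_complex k (deletion \<Delta> \<sigma>) \<Longrightarrow>
    k_decomposable_complex k \<Delta>"

lemma down_closedD: "down_closed \<Delta> \<Longrightarrow> F \<in> \<Delta> \<Longrightarrow> G \<subseteq> F \<Longrightarrow> G \<in> \<Delta>"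
  unfolding down_closed_def by blast

lemma down_closed_star: "down_closed \<Delta> \<Longrightarrow> down_closed (star \<Delta> \<sigma>)"
  unfolding down_closed_def star_def by (metis Un_mono mem_Collect_eq order_refl)

lemma down_closed_deletion: "down_closed \<Delta> \<Longrightarrow> down_closed (deletion \<Delta> \<sigma>)"
  unfolding down_closed_def deletion_def by blast

lemma simplicial_complex_star:
  "simplicial_complex \<Delta> \<Longrightarrow> \<sigma> \<in> \<Delta> \<Longrightarrow> simplicial_complex (star \<Delta> \<sigma>)"
  using down_closed_star[of \<Delta> \<sigma>] by (auto simp: simplicial_complex_def star_def)

lemma simplicial_complex_deletion:
  "simplicial_complex \<Delta> \<Longrightarrow> \<sigma> \<noteq> {} \<Longrightarrow> simplicial_complex (deletion \<Delta> \<sigma>)"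
  using down_closed_deletion[of \<Delta> \<sigma>] by (auto simp: simplicial_complex_def deletion_def)

lemma ex_facet_superset:
  fixes \<Delta> :: "'v::finite set set"
  assumes "F \<in> \<Delta>"
  obtains M where "M \<in> facets \<Delta>" "F \<subseteq> M"
proof -
  obtain M where "M \<in> {G\<in>\<Delta>. F \<subseteq> G}" "\<forall>G\<in>{G\<in>\<Delta>. F \<subseteq> G}. M \<subseteq> G \<longrightarrow> M = G"
    using finite_has_maximal[of "{G\<in>\<Delta>. F \<subseteq> G}"] assms by auto
  then have "M \<in> facets \<Delta>"
    unfolding facets_def by blast
  with \<open>M \<in> {G\<in>\<Delta>. F \<subseteq> G}\<close> show ?thesis
    using that by blast
qed

lemma facets_star: "facets (star \<Delta> \<sigma>) = {F\<in>facets \<Delta>. \<sigma> \<subseteq> F}"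
proof (intro set_eqI iffI)
  fix F assume F: "F \<in> facets (star \<Delta> \<sigma>)"
  then have "F \<union> \<sigma> \<in> star \<Delta> \<sigma>"
    by (simp add: facets_def star_def Un_assoc)
  then have "\<sigma> \<subseteq> F"
    using F unfolding facets_def by blast
  with F show "F \<in> {F\<in>facets \<Delta>. \<sigma> \<subseteq> F}"
    by (auto simp: facets_def star_def sup.absorb1 dest: order_trans)
next
  fix F assume "F \<in> {F\<in>facets \<Delta>. \<sigma> \<subseteq> F}"
  then show "F \<in> facets (star \<Delta> \<sigma>)"
    by (auto simp: facets_def star_def sup.absorb1)
qed

lemma facets_deletion:
  "shedding_face \<Delta> \<sigma> \<Longrightarrow> facets (deletion \<Delta> \<sigma>) = {F\<in>facets \<Delta>. \<not> \<sigma> \<subseteq> F}"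
  unfolding shedding_face_def facets_def deletion_def by blast

lemma star_star: "star (star \<Delta> \<tau>) \<sigma> = star \<Delta> (\<sigma> \<union> \<tau>)"
  by (simp add: star_def Un_assoc)

lemma deletion_star: "deletion (star \<Delta> \<tau>) (\<sigma> - \<tau>) = star (deletion \<Delta> \<sigma>) \<tau>"
  by (auto simp: star_def deletion_def)

lemma star_deletion_eq:
  assumes "down_closed \<Delta>" "\<tau> \<union> \<sigma> \<notin> \<Delta>"
  shows "star (deletion \<Delta> \<sigma>) \<tau> = star \<Delta> \<tau>"
proof -
  have "\<not> \<sigma> \<subseteq> F \<union> \<tau>" if "F \<union> \<tau> \<in> \<Delta>" for F
  proof
    assume "\<sigma> \<subseteq> F \<union> \<tau>"
    then have "\<tau> \<union> \<sigma> \<subseteq> F \<union> \<tau>"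
      by blast
    then show False
      using down_closedD[OF assms(1) that] assms(2) by blast
  qed
  then show ?thesis
    by (auto simp: star_def deletion_def)
qed

lemma shedding_face_star: "shedding_face \<Delta> \<sigma> \<Longrightarrow> shedding_face (star \<Delta> \<tau>) (\<sigma> - \<tau>)"
  unfolding shedding_face_def deletion_star facets_star by blast

text \<open>If \<open>\<tau> \<union> \<sigma>\<close> is a face, the shedding face \<open>\<sigma>\<close> of \<open>\<Delta>\<close> leaves the shedding face \<open>\<sigma> - \<tau>\<close>
  of the star of \<open>\<tau>\<close>, whose star and deletion are the stars of \<open>\<tau>\<close> in those of \<open>\<sigma>\<close>.\<close>

lemma k_decomposable_complex_star_shedding_face:
  fixes \<Delta> :: "'v::finite set set"
  assumes "shedding_face \<Delta> \<sigma>" "card \<sigma> \<le> k + 1" "\<tau> \<union> \<sigma> \<in> \<Delta>" "\<not> \<sigma> \<subseteq> \<tau>"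
    and "k_decomposable_complex k (star (star \<Delta> \<sigma>) \<tau>)"
    and "k_decomposable_complex k (star (deletion \<Delta> \<sigma>) \<tau>)"
  shows "k_decomposable_complex k (star \<Delta> \<tau>)"
proof (rule k_decomposable_complex.step)
  show "\<sigma> - \<tau> \<in> star \<Delta> \<tau>"
    using assms(3) by (simp add: star_def Un_commute)
  show "\<sigma> - \<tau> \<noteq> {}" "card (\<sigma> - \<tau>) \<le> k + 1"
    using assms(2,4) card_mono[of \<sigma> "\<sigma> - \<tau>"] by auto
  show "shedding_face (star \<Delta> \<tau>) (\<sigma> - \<tau>)"
    using assms(1) by (rule shedding_face_star)
  show "k_decomposable_complex k (star (star \<Delta> \<tau>) (\<sigma> - \<tau>))"
    using assms(5) by (simp add: star_star Un_commute)
  show "k_decomposable_complex k (deletion (star \<Delta> \<tau>) (\<sigma> - \<tau>))"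
    using assms(6) by (simp add: deletion_star)
qed

lemma k_decomposable_complex_star:
  fixes \<Delta> :: "'v::finite set set"
  assumes "k_decomposable_complex k \<Delta>" "down_closed \<Delta>" "\<tau> \<in> \<Delta>"
  shows "k_decomposable_complex k (star \<Delta> \<tau>)"
  using assms
proof (induction arbitrary: \<tau> rule: k_decomposable_complex.induct)
  case (simplex W)
  then have "star (Pow W) \<tau> = Pow W"
    by (auto simp: star_def)
  then show ?case
    using k_decomposable_complex.simplex by metis
next
  case (step \<sigma> \<Delta>)
  note IH_star = step.IH(1)[OF down_closed_star[OF step.prems(1)]]
    and IH_deletion = step.IH(2)[OF down_closed_deletion[OF step.prems(1)]]
  show ?case
  proof (cases "\<tau> \<union> \<sigma> \<in> \<Delta>")
    case False
    then have "\<tau> \<in> deletion \<Delta> \<sigma>"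
      using step.prems(2) by (auto simp: deletion_def sup.absorb1)
    then have "k_decomposable_complex k (star (deletion \<Delta> \<sigma>) \<tau>)"
      by (rule IH_deletion)
    then show ?thesis
      by (simp add: star_deletion_eq[OF step.prems(1) False])
  next
    case True
    then have \<tau>: "\<tau> \<in> star \<Delta> \<sigma>"
      by (simp add: star_def)
    show ?thesis
    proof (cases "\<sigma> \<subseteq> \<tau>")
      case True
      then show ?thesis
        using IH_star[OF \<tau>] by (simp add: star_star sup.absorb1)
    next
      case False
      then have "\<tau> \<in> deletion \<Delta> \<sigma>"
        using step.prems(2) by (simp add: deletion_def)
      from k_decomposable_complex_star_shedding_face[OF step.hyps(4,3) \<open>\<tau> \<union> \<sigma> \<in> \<Delta>\<close> False
          IH_star[OF \<tau>] IH_deletion[OF this]]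
      show ?thesis .
    qed
  qed
qed

text \<open>For a face \<open>\<sigma>\<close>, being a shedding face is an exchange property of the facets containing
  \<open>\<sigma>\<close>; it is the combinatorial content of shedding monomials.\<close>

lemma shedding_face_exchange:
  fixes \<Delta> :: "'v::finite set set"
  assumes "down_closed \<Delta>" "shedding_face \<Delta> \<sigma>" "F \<in> facets \<Delta>" "\<sigma> \<subseteq> F" "l \<in> \<sigma>"
  obtains G where "G \<in> facets \<Delta>" "\<not> \<sigma> \<subseteq> G" "F - G = {l}"
proof -
  have "F - {l} \<in> deletion \<Delta> \<sigma>"
    using assms(1,3,4,5) by (auto simp: deletion_def down_closed_def facets_def)
  then obtain G where G: "G \<in> facets (deletion \<Delta> \<sigma>)" "F - {l} \<subseteq> G"
    using ex_facet_superset by blast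
  then have "G \<in> facets \<Delta>" "\<not> \<sigma> \<subseteq> G"
    using assms(2) by (auto simp: shedding_face_def facets_def deletion_def)
  moreover have "l \<notin> G"
    using \<open>G \<in> facets \<Delta>\<close> \<open>\<not> \<sigma> \<subseteq> G\<close> G(2) assms(3,4) unfolding facets_def by blast
  ultimately show ?thesis
    using that G(2) assms(4,5) by blast
qed

lemma facet_deletion_extend:
  assumes "down_closed \<Delta>" "G \<in> facets (deletion \<Delta> \<sigma>)" "G \<notin> facets \<Delta>"
  obtains j where "j \<notin> G" "j \<in> \<sigma>" "insert j G \<in> \<Delta>" "\<sigma> \<subseteq> insert j G"
proof -
  have G: "G \<in> \<Delta>" "\<not> \<sigma> \<subseteq> G"
    using assms(2) by (auto simp: facets_def deletion_def)
  then obtain H where H: "H \<in> \<Delta>" "G \<subseteq> H" "H \<noteq> G"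
    using assms(3) by (auto simp: facets_def)
  then obtain j where "j \<in> H" "j \<notin> G"
    by blast
  then have j: "j \<notin> G" "insert j G \<in> \<Delta>"
    using down_closedD[OF assms(1) H(1)] H(2) by auto
  have "\<sigma> \<subseteq> insert j G"
  proof (rule ccontr)
    assume "\<not> \<sigma> \<subseteq> insert j G"
    then have "insert j G \<in> deletion \<Delta> \<sigma>"
      using j(2) by (simp add: deletion_def)
    then show False
      using assms(2) j(1) unfolding facets_def by blast
  qed
  moreover from this have "j \<in> \<sigma>"
    using G(2) by blast
  ultimately show ?thesis
    using that j by blast
qed

lemma shedding_faceI_exchange:
  fixes \<Delta> :: "'v::finite set set"
  assumes closed: "down_closed \<Delta>"
    and exchange: "\<And>F l. F \<in> facets \<Delta> \<Longrightarrow> \<sigma> \<subseteq> F \<Longrightarrow> l \<in> \<sigma> \<Longrightarrow>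
      \<exists>G\<in>facets \<Delta>. \<not> \<sigma> \<subseteq> G \<and> F - G = {l}"
  shows "shedding_face \<Delta> \<sigma>"
  unfolding shedding_face_def
proof
  fix G assume G: "G \<in> facets (deletion \<Delta> \<sigma>)"
  show "G \<in> facets \<Delta>"
  proof (rule ccontr)
    assume "G \<notin> facets \<Delta>"
    then obtain j where j: "j \<notin> G" "j \<in> \<sigma>" "insert j G \<in> \<Delta>" "\<sigma> \<subseteq> insert j G"
      by (rule facet_deletion_extend[OF closed G])
    obtain F where F: "F \<in> facets \<Delta>" "insert j G \<subseteq> F"
      by (rule ex_facet_superset[OF j(3)])
    have "\<sigma> \<subseteq> F"
      using F(2) j(4) by (rule order_trans[rotated])
    then obtain G' where G': "G' \<in> facets \<Delta>" "\<not> \<sigma> \<subseteq> G'" "F - G' = {j}"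
      using exchange[OF F(1) _ j(2)] by blast
    have "G \<subseteq> G'"
    proof
      fix x assume "x \<in> G"
      then have "x \<in> F - {j}"
        using F(2) j(1) by auto
      then show "x \<in> G'"
        using G'(3) by auto
    qed
    moreover have "G' \<in> deletion \<Delta> \<sigma>"
      using G'(1,2) by (simp add: facets_def deletion_def)
    ultimately have "G' = G"
      using G unfolding facets_def by blast
    then have "F = G'"
      using F G'(1) unfolding facets_def by blast
    then show False
      using G'(3) by blast
  qed
qed

section \<open>The complex of a monomial ideal and its minimal primes\<close>

text \<open>The Stanley--Reisner complex of the radical of \<open>J\<close>.\<close>

definition rad_complex :: "('v, 'a::comm_ring_1) mpoly set \<Rightarrow> 'v set set" where
  "rad_complex J = {F. \<forall>a. keys a \<subseteq> F \<longrightarrow> xmon a \<notin> J}"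

lemma down_closed_rad_complex: "down_closed (rad_complex J)"
  unfolding down_closed_def rad_complex_def by (simp add: subset_trans)

lemma monomial_ideal_subset_var_prime_iff:
  assumes J: "J = ideal_gen (xmon ` G)"
  shows "J \<subseteq> (var_prime A :: ('v, 'a::comm_ring_1) mpoly set) \<longleftrightarrow> - A \<in> rad_complex J"
proof -
  have "J \<subseteq> var_prime A \<longleftrightarrow> (\<forall>g\<in>G. keys g \<inter> A \<noteq> {})"
  proof
    assume "J \<subseteq> var_prime A"
    then show "\<forall>g\<in>G. keys g \<inter> A \<noteq> {}"
      using J xmon_mem_ideal_gen[of _ G] xmon_mem_var_prime_iff[of _ A] by blast
  next
    assume "\<forall>g\<in>G. keys g \<inter> A \<noteq> {}"
    then show "J \<subseteq> var_prime A"
      unfolding J by (intro ideal_gen_minimal) (auto simp: xmon_mem_var_prime_iff ideal_var_prime)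
  qed
  also have "\<dots> \<longleftrightarrow> - A \<in> rad_complex J"
    unfolding rad_complex_def J xmon_mem_monomial_ideal_iff
    by (auto dest: mdvd_keys_subset) (metis Compl_iff disjoint_iff mdvd_refl subsetI)
  finally show ?thesis .
qed

lemma prime_ideal_var_prime_between:
  assumes J: "J = ideal_gen (xmon ` G)"
    and Q: "prime_ideal (Q :: ('v::finite, 'a::comm_ring_1) mpoly set)" "J \<subseteq> Q"
  shows "J \<subseteq> var_prime {i. xmon (var i) \<in> Q}" "var_prime {i. xmon (var i) \<in> Q} \<subseteq> Q"
proof -
  show "var_prime {i. xmon (var i) \<in> Q} \<subseteq> Q"
    unfolding var_prime_def using Q(1) by (intro ideal_gen_minimal) (auto simp: prime_ideal_def)
  have "xmon g \<in> var_prime {i. xmon (var i) \<in> Q}" if "g \<in> G" for g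
  proof -
    have "xmon g \<in> Q"
      using that J Q(2) xmon_mem_ideal_gen by blast
    then show ?thesis
      using prime_ideal_xmon_mem[OF Q(1)] by (auto simp: xmon_mem_var_prime_iff)
  qed
  then show "J \<subseteq> var_prime {i. xmon (var i) \<in> Q}"
    unfolding J by (intro ideal_gen_minimal) (auto simp: ideal_var_prime)
qed

lemma min_primesD:
  "P \<in> min_primes J \<Longrightarrow> prime_ideal Q \<Longrightarrow> J \<subseteq> Q \<Longrightarrow> Q \<subseteq> P \<Longrightarrow> Q = P"
  unfolding min_primes_def by blast

lemma min_primesI:
  "prime_ideal P \<Longrightarrow> J \<subseteq> P \<Longrightarrow> (\<And>Q. prime_ideal Q \<Longrightarrow> J \<subseteq> Q \<Longrightarrow> Q \<subseteq> P \<Longrightarrow> Q = P)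
    \<Longrightarrow> P \<in> min_primes J"
  unfolding min_primes_def by blast

text \<open>Every prime \<open>Q\<close> over a monomial ideal contains the prime generated by the variables in
  \<open>Q\<close>, which still contains the ideal; so the minimal primes are primes generated by variables.\<close>

lemma min_primes_monomial_idealD:
  assumes J: "J = ideal_gen (xmon ` G)" and P: "P \<in> min_primes (J :: ('v::finite, 'a::idom) mpoly set)"
  obtains F where "F \<in> facets (rad_complex J)" "P = var_prime (- F)"
proof -
  define B where "B = {i. (xmon (var i) :: ('v, 'a) mpoly) \<in> P}"
  have "prime_ideal P" "J \<subseteq> P"
    using P by (auto simp: min_primes_def)
  note between = prime_ideal_var_prime_between[OF J this, folded B_def]
  have P_eq: "P = var_prime B"
    using min_primesD[OF P prime_var_prime between] by simp
  have "- B \<in> facets (rad_complex J)"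
    unfolding facets_def
  proof (intro CollectI conjI ballI impI)
    show "- B \<in> rad_complex J"
      using between(1) monomial_ideal_subset_var_prime_iff[OF J] by blast
    fix F assume F: "F \<in> rad_complex J" "- B \<subseteq> F"
    then have "J \<subseteq> var_prime (- F)" "(var_prime (- F) :: ('v, 'a) mpoly set) \<subseteq> P"
      using monomial_ideal_subset_var_prime_iff[OF J, of "- F"] var_prime_mono[of "- F" B] P_eq
      by auto
    then have "var_prime (- F) = (var_prime B :: ('v, 'a) mpoly set)"
      using min_primesD[OF P prime_var_prime] P_eq by blast
    then have "- F = B"
      by (rule var_prime_inj)
    then show "F = - B"
      by auto
  qed
  with P_eq show ?thesis
    using that by simp
qed

lemma min_primes_monomial_idealI:
  assumes J: "J = ideal_gen (xmon ` G)" and F: "F \<in> facets (rad_complex J)"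
  shows "var_prime (- F) \<in> min_primes (J :: ('v::finite, 'a::idom) mpoly set)"
proof (rule min_primesI)
  show "J \<subseteq> var_prime (- F)"
    using F monomial_ideal_subset_var_prime_iff[OF J] by (simp add: facets_def)
  fix Q :: "('v, 'a) mpoly set"
  assume Q: "prime_ideal Q" "J \<subseteq> Q" "Q \<subseteq> var_prime (- F)"
  define B where "B = {i. (xmon (var i) :: ('v, 'a) mpoly) \<in> Q}"
  note between = prime_ideal_var_prime_between[OF J Q(1,2), folded B_def]
  have "F \<subseteq> - B"
    using Q(3) by (auto simp: B_def xmon_mem_var_prime_iff)
  moreover have "- B \<in> rad_complex J"
    using between(1) monomial_ideal_subset_var_prime_iff[OF J] by blast
  ultimately have "- B = F"
    using F unfolding facets_def by blast
  then show "Q = var_prime (- F)"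
    using between(2) Q(3) by auto
qed (rule prime_var_prime)

lemma min_primes_monomial_ideal:
  assumes "J = ideal_gen (xmon ` G)"
  shows "min_primes (J :: ('v::finite, 'a::idom) mpoly set)
    = (\<lambda>F. var_prime (- F)) ` facets (rad_complex J)"
  using min_primes_monomial_idealD[OF assms] min_primes_monomial_idealI[OF assms] by blast

lemma ideal_gen_insert_monomial_ideal:
  "ideal_gen (insert (xmon u) (ideal_gen (xmon ` G))) = ideal_gen (xmon ` insert u G)"
  by (simp add: ideal_gen_insert_ideal_gen)

lemma rad_complex_insert_xmon:
  assumes J: "J = ideal_gen (xmon ` G)"
  shows "rad_complex (ideal_gen (insert (xmon u) J) :: ('v, 'a::comm_ring_1) mpoly set)
    = deletion (rad_complex J) (keys u)"
proof -
  have mem: "(xmon a :: ('v, 'a) mpoly) \<in> ideal_gen (insert (xmon u) J)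
      \<longleftrightarrow> mdvd u a \<or> xmon a \<in> J" for a
    using xmon_mem_monomial_ideal_iff[of a "insert u G"]
    by (simp add: J ideal_gen_insert_monomial_ideal xmon_mem_monomial_ideal_iff)
  show ?thesis
  proof (intro set_eqI iffI)
    fix F assume "F \<in> rad_complex (ideal_gen (insert (xmon u) J))"
    then show "F \<in> deletion (rad_complex J) (keys u)"
      using mem[of u] by (auto simp: mem rad_complex_def deletion_def)
  next
    fix F assume F: "F \<in> deletion (rad_complex J) (keys u)"
    have "xmon a \<notin> ideal_gen (insert (xmon u) J)" if a: "keys a \<subseteq> F" for a
    proof -
      have "\<not> mdvd u a"
        using F a mdvd_keys_subset by (force simp: deletion_def)
      then show ?thesis
        using F a by (simp add: mem rad_complex_def deletion_def)
    qed
    then show "F \<in> rad_complex (ideal_gen (insert (xmon u) J))"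
      by (simp add: rad_complex_def)
  qed
qed

lemma star_rad_complex_colon:
  assumes "is_ideal (J :: ('v, 'a::comm_ring_1) mpoly set)"
  shows "star (rad_complex (colon J (xmon u))) (keys u) = star (rad_complex J) (keys u)"
proof -
  have "F \<in> rad_complex (colon J (xmon u)) \<longleftrightarrow> F \<in> rad_complex J" if "keys u \<subseteq> F" for F
  proof -
    have "xmon a \<in> J \<Longrightarrow> xmon a \<in> colon J (xmon u)" for a
      using ideal_mult_right[OF assms] by (simp add: colon_def)
    moreover have "xmon a \<in> colon J (xmon u) \<Longrightarrow> xmon (a + u) \<in> J" for a
      by (simp add: colon_def xmon_add)
    moreover have "keys a \<subseteq> F \<Longrightarrow> keys (a + u) \<subseteq> F" for a
      using that by (simp add: keys_add_nat)
    ultimately show ?thesis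
      unfolding rad_complex_def by blast
  qed
  then show ?thesis
    unfolding star_def by auto
qed

lemma rad_complex_prime:
  assumes "prime_ideal (J :: ('v::finite, 'a::comm_ring_1) mpoly set)"
  shows "rad_complex J = Pow (- {i. xmon (var i) \<in> J})"
proof (intro set_eqI iffI)
  fix F assume "F \<in> rad_complex J"
  then show "F \<in> Pow (- {i. xmon (var i) \<in> J})"
    by (auto simp: rad_complex_def dest: spec[of _ "var _"])
next
  fix F assume "F \<in> Pow (- {i. xmon (var i) \<in> J})"
  then show "F \<in> rad_complex J"
    using prime_ideal_xmon_mem[OF assms] by (auto simp: rad_complex_def)
qed

text \<open>Minimal primes of \<open>J + (x\<^sup>u)\<close> correspond to facets of the deletion of \<open>supp u\<close>, those of
  \<open>J\<close> to facets of the complex; so a cleaner monomial has a shedding support.\<close>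

lemma shedding_face_keys_cleaner:
  assumes J: "J = ideal_gen (xmon ` G)" and "cleaner (J :: ('v::finite, 'a::idom) mpoly set) u"
  shows "shedding_face (rad_complex J) (keys u)"
  unfolding shedding_face_def
proof
  fix F assume F: "F \<in> facets (deletion (rad_complex J) (keys u))"
  have J': "ideal_gen (insert (xmon u) J) = ideal_gen (xmon ` insert u G)"
    unfolding J by (rule ideal_gen_insert_monomial_ideal)
  have "var_prime (- F) \<in> min_primes (ideal_gen (insert (xmon u) J))"
    using F by (simp add: min_primes_monomial_ideal[OF J'] rad_complex_insert_xmon[OF J, folded J'])
  then have "(var_prime (- F) :: ('v, 'a) mpoly set) \<in> var_prime ` uminus ` facets (rad_complex J)"
    using assms(2) by (auto simp: cleaner_def min_primes_monomial_ideal[OF J] image_comp comp_def)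
  then obtain F' where F': "F' \<in> facets (rad_complex J)"
    and eq: "var_prime (- F) = (var_prime (- F') :: ('v, 'a) mpoly set)"
    by blast
  from eq have "- F = - F'"
    by (rule var_prime_inj)
  with F' show "F \<in> facets (rad_complex J)"
    by simp
qed

lemma k_decomposable_complex_star_rad_complex_colon:
  fixes J :: "('v::finite, 'a::comm_ring_1) mpoly set"
  assumes "is_ideal J" "keys u \<in> rad_complex J"
    and "k_decomposable_complex k (rad_complex (colon J (xmon u)))"
  shows "k_decomposable_complex k (star (rad_complex J) (keys u))"
proof -
  note star_eq = star_rad_complex_colon[OF assms(1), of u]
  have "{} \<in> star (rad_complex J) (keys u)"
    using assms(2) by (simp add: star_def)
  then have "{} \<in> star (rad_complex (colon J (xmon u))) (keys u)"
    by (simp only: star_eq)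
  then have "keys u \<in> rad_complex (colon J (xmon u))"
    by (simp add: star_def)
  then have "k_decomposable_complex k (star (rad_complex (colon J (xmon u))) (keys u))"
    by (rule k_decomposable_complex_star[OF assms(3) down_closed_rad_complex])
  then show ?thesis
    by (simp only: star_eq)
qed

lemma k_decomposable_complex_rad_complex:
  fixes J :: "('v::finite, 'a::idom) mpoly set"
  assumes "k_clean k J"
  shows "k_decomposable_complex k (rad_complex J)"
  using assms
proof (induction rule: k_clean.induct)
  case (prime I)
  then show ?case
    using rad_complex_prime k_decomposable_complex.simplex by metis
next
  case (step I u)
  obtain G where I: "I = ideal_gen (xmon ` G)"
    using step.hyps(1) by (auto simp: monomial_ideal_def)
  define \<sigma> where "\<sigma> = keys u"
  have deletion: "k_decomposable_complex k (deletion (rad_complex I) \<sigma>)"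
    using step.IH(2) by (simp add: \<sigma>_def rad_complex_insert_xmon[OF I])
  show ?case
  proof (cases "\<sigma> \<in> rad_complex I")
    case False
    then have "deletion (rad_complex I) \<sigma> = rad_complex I"
      using down_closedD[OF down_closed_rad_complex] by (auto simp: deletion_def)
    then show ?thesis
      using deletion by simp
  next
    case True
    have "k_decomposable_complex k (star (rad_complex I) \<sigma>)"
      unfolding \<sigma>_def
      by (rule k_decomposable_complex_star_rad_complex_colon[OF _ True[unfolded \<sigma>_def] step.IH(1)])
        (simp add: I ideal_ideal_gen)
    moreover have "\<sigma> \<noteq> {}" "card \<sigma> \<le> k + 1"
      using step.hyps(4,5) by (auto simp: cleaner_def \<sigma>_def supp_def)
    moreover have "shedding_face (rad_complex I) \<sigma>"
      unfolding \<sigma>_def by (rule shedding_face_keys_cleaner[OF I step.hyps(4)])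
    ultimately show ?thesis
      using True deletion k_decomposable_complex.step by blast
  qed
qed

section \<open>Stanley--Reisner ideals\<close>

lemma lookup_sqmon: "lookup (sqmon F) i = (if i \<in> (F :: 'v::finite set) then 1 else 0)"
  by (simp add: sqmon_def lookup_sum var_def lookup_single when_def sum.delta)

lemma keys_sqmon [simp]: "keys (sqmon (F :: 'v::finite set)) = F"
  by (auto simp: in_keys_iff lookup_sqmon split: if_splits)

lemma mdvd_sqmon_iff: "mdvd (sqmon (F :: 'v::finite set)) a \<longleftrightarrow> F \<subseteq> keys a"
  by (auto simp: mdvd_def lookup_sqmon in_keys_iff Suc_le_eq)

lemma sqmon_Diff: "sqmon (A :: 'v::finite set) - sqmon B = sqmon (A - B)"
  by (rule poly_mapping_eqI) (simp add: lookup_minus lookup_sqmon)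

lemma sqmon_singleton: "sqmon {l} = var l"
  by (simp add: sqmon_def)

lemma SR_ideal_eq: "SR_ideal \<Delta> = ideal_gen (xmon ` sqmon ` (- \<Delta>))"
  unfolding SR_ideal_def by (rule arg_cong[where f = ideal_gen]) auto

lemma monomial_ideal_SR_ideal: "monomial_ideal (SR_ideal \<Delta>)"
  unfolding monomial_ideal_def SR_ideal_eq by blast

lemma xmon_mem_SR_ideal_iff:
  assumes "down_closed \<Delta>"
  shows "(xmon a :: ('v::finite, 'a::comm_ring_1) mpoly) \<in> SR_ideal \<Delta> \<longleftrightarrow> keys a \<notin> \<Delta>"
proof -
  have "(xmon a :: ('v, 'a) mpoly) \<in> SR_ideal \<Delta> \<longleftrightarrow> (\<exists>F\<in>- \<Delta>. F \<subseteq> keys a)"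
    by (simp add: SR_ideal_eq xmon_mem_monomial_ideal_iff mdvd_sqmon_iff)
  also have "\<dots> \<longleftrightarrow> keys a \<notin> \<Delta>"
  proof
    assume "\<exists>F\<in>- \<Delta>. F \<subseteq> keys a"
    then obtain F where "F \<notin> \<Delta>" "F \<subseteq> keys a"
      by blast
    then show "keys a \<notin> \<Delta>"
      using down_closedD[OF assms, of "keys a" F] by blast
  qed auto
  finally show ?thesis .
qed

lemma SR_ideal_mem_iff:
  assumes "down_closed \<Delta>"
  shows "(f :: ('v::finite, 'a::comm_ring_1) mpoly) \<in> SR_ideal \<Delta> \<longleftrightarrow> (\<forall>a\<in>keys f. keys a \<notin> \<Delta>)"
proof -
  have "f \<in> SR_ideal \<Delta> \<longleftrightarrow> (\<forall>a\<in>keys f. (xmon a :: ('v, 'a) mpoly) \<in> SR_ideal \<Delta>)"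
    unfolding SR_ideal_eq by (rule monomial_ideal_mem_iff_xmon)
  then show ?thesis
    by (simp add: xmon_mem_SR_ideal_iff[OF assms])
qed

lemma SR_idealI:
  assumes "down_closed \<Delta>" "\<And>f. f \<in> J \<longleftrightarrow> (\<forall>a\<in>keys f. keys a \<notin> \<Delta>)"
  shows "J = (SR_ideal \<Delta> :: ('v::finite, 'a::comm_ring_1) mpoly set)"
  by (rule set_eqI) (simp add: assms(2) SR_ideal_mem_iff[OF assms(1)])

lemma rad_complex_SR_ideal:
  assumes "down_closed \<Delta>"
  shows "rad_complex (SR_ideal \<Delta> :: ('v::finite, 'a::comm_ring_1) mpoly set) = \<Delta>"
  using down_closedD[OF assms]
  by (auto simp: rad_complex_def xmon_mem_SR_ideal_iff[OF assms] dest: spec[of _ "sqmon _"])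

lemma min_primes_SR_ideal:
  assumes "down_closed \<Delta>"
  shows "min_primes (SR_ideal \<Delta> :: ('v::finite, 'a::idom) mpoly set)
    = (\<lambda>F. var_prime (- F)) ` facets \<Delta>"
  using min_primes_monomial_ideal[OF SR_ideal_eq[of \<Delta>], where 'a='a]
  by (simp add: rad_complex_SR_ideal[OF assms])

lemma SR_ideal_Pow: "SR_ideal (Pow W) = (var_prime (- W) :: ('v::finite, 'a::comm_ring_1) mpoly set)"
  by (rule SR_idealI[symmetric]) (auto simp: down_closed_def var_prime_mem_iff)

lemma colon_SR_ideal_sqmon:
  assumes "down_closed \<Delta>"
  shows "colon (SR_ideal \<Delta> :: ('v::finite, 'a::comm_ring_1) mpoly set) (xmon (sqmon \<sigma>))
    = SR_ideal (star \<Delta> \<sigma>)"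
proof (rule SR_idealI[OF down_closed_star[OF assms]])
  fix f :: "('v, 'a) mpoly"
  show "f \<in> colon (SR_ideal \<Delta>) (xmon (sqmon \<sigma>)) \<longleftrightarrow> (\<forall>a\<in>keys f. keys a \<notin> star \<Delta> \<sigma>)"
    by (simp add: colon_def SR_ideal_mem_iff[OF assms] keys_mult_xmon keys_add_nat star_def)
qed

lemma insert_SR_ideal_sqmon:
  assumes "down_closed \<Delta>"
  shows "ideal_gen (insert (xmon (sqmon \<sigma>)) (SR_ideal \<Delta>) :: ('v::finite, 'a::comm_ring_1) mpoly set)
    = SR_ideal (deletion \<Delta> \<sigma>)"
proof (rule SR_idealI[OF down_closed_deletion[OF assms]])
  fix f :: "('v, 'a) mpoly"
  have "(\<exists>g\<in>insert (sqmon \<sigma>) (sqmon ` (- \<Delta>)). mdvd g a) \<longleftrightarrow> \<sigma> \<subseteq> keys a \<or> keys a \<notin> \<Delta>" for a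
    using xmon_mem_SR_ideal_iff[OF assms, of a, where 'a='a]
    by (auto simp: mdvd_sqmon_iff SR_ideal_eq xmon_mem_monomial_ideal_iff)
  then have "(\<exists>g\<in>insert (sqmon \<sigma>) (sqmon ` (- \<Delta>)). mdvd g a) \<longleftrightarrow> keys a \<notin> deletion \<Delta> \<sigma>" for a
    by (auto simp: deletion_def)
  then show "f \<in> ideal_gen (insert (xmon (sqmon \<sigma>)) (SR_ideal \<Delta>)) \<longleftrightarrow> (\<forall>a\<in>keys f. keys a \<notin> deletion \<Delta> \<sigma>)"
    by (simp add: SR_ideal_eq ideal_gen_insert_monomial_ideal monomial_ideal_mem_iff
        del: image_insert)
qed

lemma SR_ideal_eq_INT:
  assumes "down_closed \<Delta>"
  shows "(SR_ideal \<Delta> :: ('v::finite, 'a::comm_ring_1) mpoly set) = (\<Inter>F\<in>facets \<Delta>. var_prime (- F))"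
proof (rule SR_idealI[symmetric, OF assms])
  fix f :: "('v, 'a) mpoly"
  have "(\<forall>F\<in>facets \<Delta>. keys a \<inter> - F \<noteq> {}) \<longleftrightarrow> keys a \<notin> \<Delta>" for a
  proof
    assume all: "\<forall>F\<in>facets \<Delta>. keys a \<inter> - F \<noteq> {}"
    show "keys a \<notin> \<Delta>"
    proof
      assume "keys a \<in> \<Delta>"
      then obtain M where "M \<in> facets \<Delta>" "keys a \<subseteq> M"
        by (rule ex_facet_superset)
      then show False
        using all by blast
    qed
  next
    assume a: "keys a \<notin> \<Delta>"
    show "\<forall>F\<in>facets \<Delta>. keys a \<inter> - F \<noteq> {}"
    proof (intro ballI notI)
      fix F assume "F \<in> facets \<Delta>" "keys a \<inter> - F = {}"
      then have "F \<in> \<Delta>" "keys a \<subseteq> F"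
        by (auto simp: facets_def)
      then show False
        using a down_closedD[OF assms] by blast
    qed
  qed
  then show "f \<in> (\<Inter>F\<in>facets \<Delta>. var_prime (- F)) \<longleftrightarrow> (\<forall>a\<in>keys f. keys a \<notin> \<Delta>)"
    by (simp add: var_prime_mem_iff) blast
qed

lemma colon_INT_prime_ideals:
  assumes "\<And>F. F \<in> S \<Longrightarrow> prime_ideal (P F)"
  shows "colon (\<Inter>F\<in>S. P F) f = (\<Inter>F\<in>{F\<in>S. f \<notin> P F}. P F)"
proof -
  have "g * f \<in> P F \<longleftrightarrow> g \<in> P F \<or> f \<in> P F" if "F \<in> S" for g F
    using assms[OF that] ideal_mult_left ideal_mult_right by (auto simp: prime_ideal_def)
  then show ?thesis
    by (auto simp: colon_def)
qed

text \<open>A prime equal to a finite intersection of ideals is one of them: otherwise the product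
  of elements \<open>c F \<in> P F - Q\<close> lies in \<open>Q\<close>.\<close>

lemma prime_ideal_eq_INT:
  assumes Q: "prime_ideal Q" "Q = (\<Inter>F\<in>S. P F)" and "finite S" "\<And>F. F \<in> S \<Longrightarrow> is_ideal (P F)"
  shows "\<exists>F\<in>S. Q = P F"
proof (rule ccontr)
  assume "\<not> (\<exists>F\<in>S. Q = P F)"
  then have "\<forall>F\<in>S. \<exists>c. c \<in> P F \<and> c \<notin> Q"
    using Q(2) by blast
  then obtain c where c: "\<And>F. F \<in> S \<Longrightarrow> c F \<in> P F \<and> c F \<notin> Q"
    by metis
  have "prod c S \<in> P F" if "F \<in> S" for F
    using c[OF that] ideal_mult_right[OF assms(4)[OF that], of "c F" "prod c (S - {F})"]
    by (simp add: prod.remove[OF assms(3) that])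
  then have "prod c S \<in> Q"
    using Q(2) by blast
  then show False
    using prime_ideal_prod_mem[OF Q(1) assms(3)] c by blast
qed

lemma no_embedded_primes_SR_ideal:
  assumes "down_closed \<Delta>"
  shows "no_embedded_primes (SR_ideal \<Delta> :: ('v::finite, 'a::idom) mpoly set)"
  unfolding no_embedded_primes_def
proof
  fix P assume "P \<in> ass_primes (SR_ideal \<Delta> :: ('v, 'a) mpoly set)"
  then obtain f where P: "prime_ideal P" "P = colon (SR_ideal \<Delta>) f"
    by (auto simp: ass_primes_def)
  then have P_eq: "P = (\<Inter>F\<in>{F\<in>facets \<Delta>. f \<notin> var_prime (- F)}. var_prime (- F))"
    by (simp add: SR_ideal_eq_INT[OF assms] colon_INT_prime_ideals prime_var_prime)
  have "finite {F\<in>facets \<Delta>. f \<notin> var_prime (- F)}"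
    by (rule finite_subset[OF subset_UNIV]) simp
  from prime_ideal_eq_INT[OF P(1) P_eq this ideal_var_prime]
  obtain F where "F \<in> facets \<Delta>" "P = var_prime (- F)"
    by blast
  then show "P \<in> min_primes (SR_ideal \<Delta>)"
    by (simp add: min_primes_SR_ideal[OF assms])
qed

lemma cleaner_sqmon_shedding_face:
  assumes "down_closed \<Delta>" "\<sigma> \<in> \<Delta>" "\<sigma> \<noteq> {}" "shedding_face \<Delta> \<sigma>"
  shows "cleaner (SR_ideal \<Delta> :: ('v::finite, 'a::idom) mpoly set) (sqmon \<sigma>)"
  unfolding cleaner_def
proof (intro conjI)
  show "sqmon \<sigma> \<noteq> 0"
    using assms(3) keys_sqmon[of \<sigma>] by (metis keys_zero)
  show "xmon (sqmon \<sigma>) \<notin> (SR_ideal \<Delta> :: ('v, 'a) mpoly set)"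
    using assms(2) by (simp add: xmon_mem_SR_ideal_iff[OF assms(1)])
  show "min_primes (ideal_gen (insert (xmon (sqmon \<sigma>)) (SR_ideal \<Delta>)))
    \<subseteq> min_primes (SR_ideal \<Delta> :: ('v, 'a) mpoly set)"
    using assms(4) by (auto simp: insert_SR_ideal_sqmon min_primes_SR_ideal down_closed_deletion
        assms(1) shedding_face_def)
qed

lemma k_clean_SR_ideal:
  assumes "k_decomposable_complex k \<Delta>" "simplicial_complex \<Delta>"
  shows "k_clean k (SR_ideal \<Delta> :: ('v::finite, 'a::idom) mpoly set)"
  using assms
proof (induction rule: k_decomposable_complex.induct)
  case (simplex W)
  then show ?case
    using prime_ideal_one_notin[OF prime_var_prime]
    by (auto simp: SR_ideal_Pow monomial_ideal_SR_ideal[of "Pow W", unfolded SR_ideal_Pow]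
        intro!: k_clean.prime prime_var_prime)
next
  case (step \<sigma> \<Delta>)
  then have closed: "down_closed \<Delta>"
    by (simp add: simplicial_complex_def)
  have "xmon 0 \<notin> (SR_ideal \<Delta> :: ('v, 'a) mpoly set)"
    using step.prems by (simp add: xmon_mem_SR_ideal_iff[OF closed] simplicial_complex_def)
  then have proper: "(SR_ideal \<Delta> :: ('v, 'a) mpoly set) \<noteq> UNIV"
    by auto
  show ?case
  proof (rule k_clean.step[OF monomial_ideal_SR_ideal proper no_embedded_primes_SR_ideal[OF closed]
        cleaner_sqmon_shedding_face[OF closed step.hyps(1,2,4)]])
    show "card (supp (sqmon \<sigma>)) \<le> k + 1"
      using step.hyps(3) by (simp add: supp_def)
    have "k_clean k (SR_ideal (star \<Delta> \<sigma>) :: ('v, 'a) mpoly set)"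
      using step.IH(1) simplicial_complex_star[OF step.prems step.hyps(1)] by blast
    then show "k_clean k (colon (SR_ideal \<Delta> :: ('v, 'a) mpoly set) (xmon (sqmon \<sigma>)))"
      by (simp add: colon_SR_ideal_sqmon[OF closed])
    have "k_clean k (SR_ideal (deletion \<Delta> \<sigma>) :: ('v, 'a) mpoly set)"
      using step.IH(2) simplicial_complex_deletion[OF step.prems step.hyps(2)] by blast
    then show "k_clean k (ideal_gen (insert (xmon (sqmon \<sigma>)) (SR_ideal \<Delta> :: ('v, 'a) mpoly set)))"
      by (simp add: insert_SR_ideal_sqmon[OF closed])
  qed
qed

lemma k_clean_SR_ideal_iff:
  assumes "simplicial_complex \<Delta>"
  shows "k_clean k (SR_ideal \<Delta> :: ('v::finite, 'a::idom) mpoly set) \<longleftrightarrow> k_decomposable_complex k \<Delta>"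
proof -
  have "rad_complex (SR_ideal \<Delta> :: ('v, 'a) mpoly set) = \<Delta>"
    using assms by (simp add: rad_complex_SR_ideal simplicial_complex_def)
  then show ?thesis
    using k_decomposable_complex_rad_complex[of k "SR_ideal \<Delta>"] k_clean_SR_ideal[OF _ assms] by auto
qed

section \<open>Alexander duality\<close>

definition complement_monomials :: "'v::finite set set \<Rightarrow> ('v \<Rightarrow>\<^sub>0 nat) set" where
  "complement_monomials \<F> = (\<lambda>F. sqmon (- F)) ` \<F>"

lemma down_closed_alex_dual_complex:
  assumes "down_closed \<Delta>"
  shows "down_closed (alex_dual_complex \<Delta>)"
  unfolding down_closed_def
proof (intro ballI allI impI)
  fix F G assume "F \<in> alex_dual_complex \<Delta>" "G \<subseteq> F"
  moreover have "UNIV - F \<subseteq> UNIV - G"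
    using \<open>G \<subseteq> F\<close> by blast
  ultimately show "G \<in> alex_dual_complex \<Delta>"
    using down_closedD[OF assms, of "UNIV - G" "UNIV - F"] by (auto simp: alex_dual_complex_def)
qed

lemma SR_ideal_alex_dual_complex:
  assumes "down_closed \<Delta>"
  shows "(SR_ideal (alex_dual_complex \<Delta>) :: ('v::finite, 'a::comm_ring_1) mpoly set)
    = ideal_gen (xmon ` complement_monomials (facets \<Delta>))"
proof (rule SR_idealI[symmetric, OF down_closed_alex_dual_complex[OF assms]])
  fix f :: "('v, 'a) mpoly"
  have "(\<exists>g\<in>complement_monomials (facets \<Delta>). mdvd g a) \<longleftrightarrow> - keys a \<in> \<Delta>" for a
  proof
    assume "\<exists>g\<in>complement_monomials (facets \<Delta>). mdvd g a"
    then obtain F where "F \<in> facets \<Delta>" "- keys a \<subseteq> F"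
      by (auto simp: complement_monomials_def mdvd_sqmon_iff)
    then show "- keys a \<in> \<Delta>"
      using down_closedD[OF assms] by (auto simp: facets_def)
  next
    assume "- keys a \<in> \<Delta>"
    then obtain M where "M \<in> facets \<Delta>" "- keys a \<subseteq> M"
      by (rule ex_facet_superset)
    then show "\<exists>g\<in>complement_monomials (facets \<Delta>). mdvd g a"
      by (auto simp: complement_monomials_def mdvd_sqmon_iff)
  qed
  then show "f \<in> ideal_gen (xmon ` complement_monomials (facets \<Delta>))
      \<longleftrightarrow> (\<forall>a\<in>keys f. keys a \<notin> alex_dual_complex \<Delta>)"
    by (simp add: monomial_ideal_mem_iff alex_dual_complex_def Compl_eq_Diff_UNIV)
qed

lemma mingens_ideal_gen_antichain:
  assumes "\<And>x y. x \<in> M \<Longrightarrow> y \<in> M \<Longrightarrow> mdvd x y \<Longrightarrow> x = y"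
  shows "mingens (ideal_gen (xmon ` M) :: ('v, 'a::comm_ring_1) mpoly set) = M"
proof (intro set_eqI iffI)
  fix a assume "a \<in> mingens (ideal_gen (xmon ` M) :: ('v, 'a) mpoly set)"
  then have "\<exists>g\<in>M. mdvd g a"
    and min: "\<And>b. (xmon b :: ('v, 'a) mpoly) \<in> ideal_gen (xmon ` M) \<Longrightarrow> mdvd b a \<Longrightarrow> b = a"
    by (auto simp: mingens_def xmon_mem_monomial_ideal_iff)
  then obtain g where "g \<in> M" "mdvd g a"
    by blast
  moreover from this have "g = a"
    using min xmon_mem_ideal_gen by blast
  ultimately show "a \<in> M"
    by simp
next
  fix a assume a: "a \<in> M"
  have "b = a" if "g \<in> M" "mdvd g b" "mdvd b a" for b g
    using assms[OF that(1) a mdvd_trans[OF that(2,3)]] that(2,3) mdvd_antisym by blast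
  then show "a \<in> mingens (ideal_gen (xmon ` M) :: ('v, 'a) mpoly set)"
    using a by (auto simp: mingens_def xmon_mem_monomial_ideal_iff intro: bexI[where x = a])
qed

lemma mingens_complement_monomials:
  assumes "\<F> \<subseteq> facets \<Delta>"
  shows "mingens (ideal_gen (xmon ` complement_monomials \<F>) :: ('v::finite, 'a::comm_ring_1) mpoly set)
    = complement_monomials \<F>"
proof (rule mingens_ideal_gen_antichain)
  fix x y assume "x \<in> complement_monomials \<F>" "y \<in> complement_monomials \<F>" "mdvd x y"
  then obtain F G where F: "F \<in> facets \<Delta>" "x = sqmon (- F)" and G: "G \<in> facets \<Delta>" "y = sqmon (- G)"
    using assms by (auto simp: complement_monomials_def)
  then have "G \<subseteq> F"
    using \<open>mdvd x y\<close> by (auto simp: mdvd_sqmon_iff)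
  then have "G = F"
    using F(1) G(1) unfolding facets_def by blast
  then show "x = y"
    using F(2) G(2) by simp
qed

lemma mingens_SR_ideal_alex_dual_complex:
  assumes "down_closed \<Delta>"
  shows "mingens (SR_ideal (alex_dual_complex \<Delta>) :: ('v::finite, 'a::comm_ring_1) mpoly set)
    = complement_monomials (facets \<Delta>)"
  by (simp add: SR_ideal_alex_dual_complex[OF assms] mingens_complement_monomials[OF order_refl])

lemma mon_colon_complement_monomials:
  "mon_colon (sqmon (- G)) (sqmon (- F)) = var l \<longleftrightarrow> F - G = {l :: 'v::finite}"
proof -
  have "mon_colon (sqmon (- G)) (sqmon (- F)) = sqmon (F - G)"
    by (simp add: mon_colon_def sqmon_Diff Diff_eq inf_commute)
  then show ?thesis
    by (metis keys_sqmon sqmon_singleton)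
qed

lemma bracket_one_sqmon_Compl:
  "bracket_one v (sqmon (- F)) \<longleftrightarrow> {i. lookup v i = 1} \<subseteq> (F :: 'v::finite set)"
  by (auto simp: bracket_one_def supp_def mdvd_single_iff lookup_sqmon in_keys_iff le_Suc_eq)

lemma lower_part_SR_ideal_alex_dual_complex:
  assumes "down_closed \<Delta>"
  shows "lower_part (SR_ideal (alex_dual_complex \<Delta>) :: ('v::finite, 'a::comm_ring_1) mpoly set) v
    = ideal_gen (xmon ` complement_monomials {F\<in>facets \<Delta>. {i. lookup v i = 1} \<subseteq> F})"
proof -
  have "{w\<in>mingens (SR_ideal (alex_dual_complex \<Delta>) :: ('v, 'a) mpoly set). bracket_one v w}
      = complement_monomials {F\<in>facets \<Delta>. {i. lookup v i = 1} \<subseteq> F}"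
    unfolding mingens_SR_ideal_alex_dual_complex[OF assms]
    by (auto simp: complement_monomials_def bracket_one_sqmon_Compl simp del: Collect_subset)
  then show ?thesis
    by (simp add: lower_part_def)
qed

lemma upper_part_SR_ideal_alex_dual_complex:
  assumes "down_closed \<Delta>"
  shows "upper_part (SR_ideal (alex_dual_complex \<Delta>) :: ('v::finite, 'a::comm_ring_1) mpoly set) v
    = ideal_gen (xmon ` complement_monomials {F\<in>facets \<Delta>. \<not> {i. lookup v i = 1} \<subseteq> F})"
proof -
  have "{w\<in>mingens (SR_ideal (alex_dual_complex \<Delta>) :: ('v, 'a) mpoly set). \<not> bracket_one v w}
      = complement_monomials {F\<in>facets \<Delta>. \<not> {i. lookup v i = 1} \<subseteq> F}"
    unfolding mingens_SR_ideal_alex_dual_complex[OF assms]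
    by (auto simp: complement_monomials_def bracket_one_sqmon_Compl simp del: Collect_subset)
  then show ?thesis
    by (simp add: upper_part_def)
qed

lemma lookup_sqmon_eq_1: "{i. lookup (sqmon \<sigma>) i = 1} = (\<sigma> :: 'v::finite set)"
  by (auto simp: lookup_sqmon)

lemma SR_ideal_alex_dual_complex_facets_eq:
  assumes "down_closed \<Delta>'" "facets \<Delta>' = \<F>"
  shows "ideal_gen (xmon ` complement_monomials \<F>)
    = (SR_ideal (alex_dual_complex \<Delta>') :: ('v::finite, 'a::comm_ring_1) mpoly set)"
  using SR_ideal_alex_dual_complex[OF assms(1), where 'a='a] assms(2) by simp

lemma lower_part_SR_ideal_alex_dual_complex_star:
  assumes "down_closed \<Delta>"
  shows "lower_part (SR_ideal (alex_dual_complex \<Delta>) :: ('v::finite, 'a::comm_ring_1) mpoly set) v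
    = SR_ideal (alex_dual_complex (star \<Delta> {i. lookup v i = 1}))"
  unfolding lower_part_SR_ideal_alex_dual_complex[OF assms]
  by (rule SR_ideal_alex_dual_complex_facets_eq[OF down_closed_star[OF assms] facets_star])

lemma upper_part_SR_ideal_alex_dual_complex_deletion:
  assumes "down_closed \<Delta>" "shedding_face \<Delta> \<sigma>" "\<sigma> = {i. lookup v i = 1}"
  shows "upper_part (SR_ideal (alex_dual_complex \<Delta>) :: ('v::finite, 'a::comm_ring_1) mpoly set) v
    = SR_ideal (alex_dual_complex (deletion \<Delta> \<sigma>))"
  unfolding upper_part_SR_ideal_alex_dual_complex[OF assms(1)] assms(3)[symmetric]
  by (rule SR_ideal_alex_dual_complex_facets_eq[OF down_closed_deletion[OF assms(1)]
        facets_deletion[OF assms(2)]])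

text \<open>The shedding condition on \<open>v\<close> for the dual ideal is the exchange property of shedding
  faces, for the set \<open>\<sigma>\<close> of variables occurring in \<open>v\<close> with exponent one.\<close>

lemma shedding_SR_ideal_alex_dual_complex_iff:
  fixes \<Delta> :: "'v::finite set set"
  assumes "down_closed \<Delta>" and \<sigma>: "\<sigma> = {i. lookup v i = 1}"
  shows "shedding (SR_ideal (alex_dual_complex \<Delta>) :: ('v, 'a::comm_ring_1) mpoly set) v \<longleftrightarrow>
    (\<exists>F\<in>facets \<Delta>. \<sigma> \<subseteq> F) \<and>
    (\<forall>F\<in>facets \<Delta>. \<sigma> \<subseteq> F \<longrightarrow> (\<forall>l\<in>keys v. \<exists>G\<in>facets \<Delta>. \<not> \<sigma> \<subseteq> G \<and> F - G = {l}))"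
proof -
  let ?I = "SR_ideal (alex_dual_complex \<Delta>) :: ('v, 'a) mpoly set"
  let ?low = "{F\<in>facets \<Delta>. \<sigma> \<subseteq> F}" and ?up = "{F\<in>facets \<Delta>. \<not> \<sigma> \<subseteq> F}"
  have low: "lower_part ?I v = ideal_gen (xmon ` complement_monomials ?low)"
    and up: "upper_part ?I v = ideal_gen (xmon ` complement_monomials ?up)"
    unfolding \<sigma> by (simp_all add: lower_part_SR_ideal_alex_dual_complex upper_part_SR_ideal_alex_dual_complex assms(1))
  have nonzero_iff: "lower_part ?I v \<noteq> {0} \<longleftrightarrow> ?low \<noteq> {}"
    by (simp add: low ideal_gen_xmon_eq_0_iff complement_monomials_def)
  have mingens: "mingens (lower_part ?I v) = complement_monomials ?low"
    "mingens (upper_part ?I v) = complement_monomials ?up"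
    unfolding low up by (simp_all add: mingens_complement_monomials[of _ \<Delta>])
  have bex_iff: "(\<exists>uj\<in>(\<lambda>G. sqmon (- G)) ` ?up. mon_colon uj (sqmon (- F)) = var l)
      \<longleftrightarrow> (\<exists>G\<in>facets \<Delta>. \<not> \<sigma> \<subseteq> G \<and> F - G = {l})" for F l
    by (auto simp: mon_colon_complement_monomials)
  have exchange_iff: "(\<forall>ui\<in>complement_monomials ?low. \<forall>l\<in>keys v.
        \<exists>uj\<in>complement_monomials ?up. mon_colon uj ui = var l)
      \<longleftrightarrow> (\<forall>F\<in>facets \<Delta>. \<sigma> \<subseteq> F \<longrightarrow> (\<forall>l\<in>keys v. \<exists>G\<in>facets \<Delta>. \<not> \<sigma> \<subseteq> G \<and> F - G = {l}))"
    unfolding complement_monomials_def Ball_image_comp comp_def bex_iff by auto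
  have "?low \<noteq> {} \<longleftrightarrow> (\<exists>F\<in>facets \<Delta>. \<sigma> \<subseteq> F)"
    by auto
  then show ?thesis
    unfolding shedding_def supp_def mingens nonzero_iff exchange_iff by simp
qed

lemma shedding_sqmon_SR_ideal_alex_dual_complex:
  fixes \<Delta> :: "'v::finite set set"
  assumes "down_closed \<Delta>" "\<sigma> \<in> \<Delta>" "shedding_face \<Delta> \<sigma>"
  shows "shedding (SR_ideal (alex_dual_complex \<Delta>) :: ('v, 'a::comm_ring_1) mpoly set) (sqmon \<sigma>)"
proof -
  obtain F0 where "F0 \<in> facets \<Delta>" "\<sigma> \<subseteq> F0"
    by (rule ex_facet_superset[OF assms(2)])
  moreover have "\<exists>G\<in>facets \<Delta>. \<not> \<sigma> \<subseteq> G \<and> F - G = {l}"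
    if F: "F \<in> facets \<Delta>" "\<sigma> \<subseteq> F" "l \<in> \<sigma>" for F l
  proof -
    obtain G where "G \<in> facets \<Delta>" "\<not> \<sigma> \<subseteq> G" "F - G = {l}"
      by (rule shedding_face_exchange[OF assms(1,3) F])
    then show ?thesis
      by blast
  qed
  ultimately show ?thesis
    by (auto simp: shedding_SR_ideal_alex_dual_complex_iff[OF assms(1) lookup_sqmon_eq_1[of \<sigma>, symmetric]])
qed

lemma k_decomposable_SR_ideal_alex_dual_complex:
  assumes "k_decomposable_complex k \<Delta>" "simplicial_complex \<Delta>"
  shows "k_decomposable k (SR_ideal (alex_dual_complex \<Delta>) :: ('v::finite, 'a::comm_ring_1) mpoly set)"
  using assms
proof (induction rule: k_decomposable_complex.induct)
  case (simplex W)
  have "down_closed (Pow W)" "facets (Pow W) = {W}"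
    by (auto simp: down_closed_def facets_def)
  then have "mingens (SR_ideal (alex_dual_complex (Pow W)) :: ('v, 'a) mpoly set) = {sqmon (- W)}"
    by (simp add: mingens_SR_ideal_alex_dual_complex complement_monomials_def)
  then show ?case
    by (simp add: k_decomposable.single monomial_ideal_SR_ideal)
next
  case (step \<sigma> \<Delta>)
  then have closed: "down_closed \<Delta>"
    by (simp add: simplicial_complex_def)
  let ?I = "SR_ideal (alex_dual_complex \<Delta>) :: ('v, 'a) mpoly set"
  note \<sigma> = lookup_sqmon_eq_1[of \<sigma>, symmetric]
  have "lower_part ?I (sqmon \<sigma>) = SR_ideal (alex_dual_complex (star \<Delta> \<sigma>))"
    using lower_part_SR_ideal_alex_dual_complex_star[OF closed, of "sqmon \<sigma>", unfolded lookup_sqmon_eq_1]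
    by simp
  then have lower: "k_decomposable k (lower_part ?I (sqmon \<sigma>))"
    using step.IH(1) simplicial_complex_star[OF step.prems step.hyps(1)] by simp
  have "upper_part ?I (sqmon \<sigma>) = SR_ideal (alex_dual_complex (deletion \<Delta> \<sigma>))"
    by (rule upper_part_SR_ideal_alex_dual_complex_deletion[OF closed step.hyps(4) \<sigma>])
  then have upper: "k_decomposable k (upper_part ?I (sqmon \<sigma>))"
    using step.IH(2) simplicial_complex_deletion[OF step.prems step.hyps(2)] by simp
  have shedding: "shedding ?I (sqmon \<sigma>)"
    by (rule shedding_sqmon_SR_ideal_alex_dual_complex[OF closed step.hyps(1,4)])
  have card: "card (supp (sqmon \<sigma>)) \<le> k + 1"
    using step.hyps(3) by (simp add: supp_def)
  show ?case
    by (rule k_decomposable.step[OF monomial_ideal_SR_ideal shedding card upper lower])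
qed

lemma eq_Pow_if_facets_eq_singleton:
  fixes \<Delta> :: "'v::finite set set"
  assumes "down_closed \<Delta>" "facets \<Delta> = {W}"
  shows "\<Delta> = Pow W"
proof (intro set_eqI iffI)
  fix F assume "F \<in> \<Delta>"
  then obtain M where "M \<in> facets \<Delta>" "F \<subseteq> M"
    by (rule ex_facet_superset)
  then show "F \<in> Pow W"
    using assms(2) by simp
next
  fix F assume "F \<in> Pow W"
  moreover have "W \<in> \<Delta>"
    using assms(2) by (auto simp: facets_def)
  ultimately show "F \<in> \<Delta>"
    using down_closedD[OF assms(1)] by blast
qed

lemma simplex_if_card_mingens_SR_ideal_alex_dual_complex:
  fixes \<Delta> :: "'v::finite set set"
  assumes "down_closed \<Delta>"
    and "card (mingens (SR_ideal (alex_dual_complex \<Delta>) :: ('v, 'a::comm_ring_1) mpoly set)) = 1"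
  obtains W where "\<Delta> = Pow W"
proof -
  have "inj_on (\<lambda>F. sqmon (- F)) (facets \<Delta>)"
    by (rule inj_onI) (metis keys_sqmon double_compl)
  then have "card (facets \<Delta>) = 1"
    using assms(2) by (simp add: mingens_SR_ideal_alex_dual_complex[OF assms(1)]
        complement_monomials_def card_image)
  then obtain W where "facets \<Delta> = {W}"
    by (rule card_1_singletonE)
  then show ?thesis
    using that eq_Pow_if_facets_eq_singleton[OF assms(1)] by blast
qed

text \<open>If \<open>v\<close> involves a variable then, by the exchange property applied to one facet over
  \<open>\<sigma>\<close>, every variable of \<open>v\<close> has exponent one, so \<open>\<sigma>\<close> is the support of \<open>v\<close>.\<close>

lemma shedding_face_if_shedding_SR_ideal_alex_dual_complex:
  fixes \<Delta> :: "'v::finite set set"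
  assumes "down_closed \<Delta>" "shedding (SR_ideal (alex_dual_complex \<Delta>) :: ('v, 'a::comm_ring_1) mpoly set) v"
    and \<sigma>: "\<sigma> = {i. lookup v i = 1}" and "keys v \<noteq> {}"
  shows "keys v = \<sigma>" "\<sigma> \<in> \<Delta>" "shedding_face \<Delta> \<sigma>"
proof -
  obtain F0 where F0: "F0 \<in> facets \<Delta>" "\<sigma> \<subseteq> F0"
    and exchange: "\<And>F l. F \<in> facets \<Delta> \<Longrightarrow> \<sigma> \<subseteq> F \<Longrightarrow> l \<in> keys v \<Longrightarrow>
      \<exists>G\<in>facets \<Delta>. \<not> \<sigma> \<subseteq> G \<and> F - G = {l}"
    using assms(2) by (auto simp: shedding_SR_ideal_alex_dual_complex_iff[OF assms(1) \<sigma>])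
  have "keys v \<subseteq> \<sigma>"
  proof
    fix l assume "l \<in> keys v"
    then obtain G where "\<not> \<sigma> \<subseteq> G" "F0 - G = {l}"
      using exchange[OF F0] by blast
    then obtain j where "j \<in> \<sigma>" "j \<in> F0 - G"
      using F0(2) by blast
    then show "l \<in> \<sigma>"
      using \<open>F0 - G = {l}\<close> by simp
  qed
  moreover have "\<sigma> \<subseteq> keys v"
    by (auto simp: \<sigma> in_keys_iff)
  ultimately show keys: "keys v = \<sigma>"
    by (rule subset_antisym)
  show "\<sigma> \<in> \<Delta>"
    using F0 down_closedD[OF assms(1)] by (auto simp: facets_def)
  show "shedding_face \<Delta> \<sigma>"
    using exchange by (intro shedding_faceI_exchange[OF assms(1)]) (simp add: keys)
qed

lemma k_decomposable_complex_if_k_decomposable_alex_dual: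
  fixes J :: "('v::finite, 'a::comm_ring_1) mpoly set"
  assumes "k_decomposable k J" "simplicial_complex \<Delta>" "J = SR_ideal (alex_dual_complex \<Delta>)"
  shows "k_decomposable_complex k \<Delta>"
  using assms
proof (induction arbitrary: \<Delta> rule: k_decomposable.induct)
  case (single I)
  then have closed: "down_closed \<Delta>"
    by (simp add: simplicial_complex_def)
  obtain W where "\<Delta> = Pow W"
    using simplex_if_card_mingens_SR_ideal_alex_dual_complex[OF closed] single by metis
  then show ?case
    by (simp add: k_decomposable_complex.simplex)
next
  case (step I v)
  then have closed: "down_closed \<Delta>"
    by (simp add: simplicial_complex_def)
  define \<sigma> where "\<sigma> = {i. lookup v i = 1}"
  have lower: "lower_part I v = SR_ideal (alex_dual_complex (star \<Delta> \<sigma>))"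
    unfolding \<sigma>_def step.prems(2) by (rule lower_part_SR_ideal_alex_dual_complex_star[OF closed])
  show ?case
  proof (cases "keys v = {}")
    case True
    text \<open>Then \<open>v = 1\<close> and the lower part is the whole ideal.\<close>
    then have "star \<Delta> \<sigma> = \<Delta>"
      by (auto simp: \<sigma>_def star_def in_keys_iff)
    then show ?thesis
      using step.IH(2)[OF step.prems(1)] lower by simp
  next
    case False
    note shed = shedding_face_if_shedding_SR_ideal_alex_dual_complex[OF closed
        step.hyps(2)[unfolded step.prems(2)] \<sigma>_def False]
    have upper: "upper_part I v = SR_ideal (alex_dual_complex (deletion \<Delta> \<sigma>))"
      unfolding step.prems(2) by (rule upper_part_SR_ideal_alex_dual_complex_deletion[OF closed shed(3) \<sigma>_def])
    have "\<sigma> \<noteq> {}" "card \<sigma> \<le> k + 1"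
      using False step.hyps(3) shed(1) by (auto simp: supp_def)
    moreover have "k_decomposable_complex k (star \<Delta> \<sigma>)"
      using step.IH(2) simplicial_complex_star[OF step.prems(1) shed(2)] lower by blast
    moreover have "k_decomposable_complex k (deletion \<Delta> \<sigma>)"
      using step.IH(1) simplicial_complex_deletion[OF step.prems(1) \<open>\<sigma> \<noteq> {}\<close>] upper by blast
    ultimately show ?thesis
      using k_decomposable_complex.step[OF shed(2) _ _ shed(3)] by blast
  qed
qed

lemma k_decomposable_SR_ideal_alex_dual_complex_iff:
  assumes "simplicial_complex \<Delta>"
  shows "k_decomposable k (SR_ideal (alex_dual_complex \<Delta>) :: ('v::finite, 'a::comm_ring_1) mpoly set)
    \<longleftrightarrow> k_decomposable_complex k \<Delta>"
  using k_decomposable_SR_ideal_alex_dual_complex[OF _ assms]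
    k_decomposable_complex_if_k_decomposable_alex_dual[OF _ assms refl] by blast

section \<open>Squarefree monomial ideals\<close>

lemma mdvd_squarefree_iff:
  assumes "squarefree_mon g"
  shows "mdvd g a \<longleftrightarrow> keys g \<subseteq> keys a"
proof
  assume keys: "keys g \<subseteq> keys a"
  show "mdvd g a"
    unfolding mdvd_def
  proof
    fix i
    show "lookup g i \<le> lookup a i"
    proof (cases "i \<in> keys g")
      case True
      then have "i \<in> keys a"
        using keys by blast
      then have "lookup a i \<noteq> 0"
        by (simp add: in_keys_iff)
      moreover have "lookup g i \<le> 1"
        using assms by (simp add: squarefree_mon_def)
      ultimately show ?thesis
        by linarith
    qed (simp add: in_keys_iff)
  qed
qed (rule mdvd_keys_subset)

lemma squarefree_monomial_ideal_eq_SR_ideal: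
  fixes I :: "('v::finite, 'a::comm_ring_1) mpoly set"
  assumes I: "I = ideal_gen (xmon ` G)" and G: "\<And>g. g \<in> G \<Longrightarrow> squarefree_mon g \<and> g \<noteq> 0"
  shows "simplicial_complex (SR_complex I)" "I = SR_ideal (SR_complex I)"
proof -
  have xmon_mem: "xmon a \<in> I \<longleftrightarrow> (\<exists>g\<in>G. keys g \<subseteq> keys a)" for a
    by (simp add: I xmon_mem_monomial_ideal_iff mdvd_squarefree_iff G)
  then have face: "F \<in> SR_complex I \<longleftrightarrow> (\<forall>g\<in>G. \<not> keys g \<subseteq> F)" for F
    by (simp add: SR_complex_def)
  have "{} \<in> SR_complex I"
    using G by (auto simp: face)
  moreover have "down_closed (SR_complex I)"
    unfolding down_closed_def
  proof (intro ballI allI impI)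
    fix F H assume F: "F \<in> SR_complex I" "H \<subseteq> F"
    show "H \<in> SR_complex I"
      unfolding face
    proof (intro ballI notI)
      fix g assume "g \<in> G" "keys g \<subseteq> H"
      moreover from this(2) F(2) have "keys g \<subseteq> F"
        by (rule subset_trans)
      ultimately show False
        using F(1) by (simp add: face)
    qed
  qed
  ultimately show complex: "simplicial_complex (SR_complex I)"
    by (simp add: simplicial_complex_def)
  show "I = SR_ideal (SR_complex I)"
  proof (rule SR_idealI)
    show "down_closed (SR_complex I)"
      using complex by (simp add: simplicial_complex_def)
    fix f
    have "f \<in> I \<longleftrightarrow> (\<forall>a\<in>keys f. xmon a \<in> I)"
      unfolding I by (rule monomial_ideal_mem_iff_xmon)
    then show "f \<in> I \<longleftrightarrow> (\<forall>a\<in>keys f. keys a \<notin> SR_complex I)"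
      by (simp add: xmon_mem face)
  qed
qed

theorem corollary4p4:
  fixes I :: "('v::finite, 'a::field) mpoly set" and k :: nat
  assumes "\<exists>G. I = ideal_gen (xmon ` G) \<and> (\<forall>g\<in>G. squarefree_mon g \<and> mdeg g \<ge> 2)"
  shows "k_clean k I \<longleftrightarrow> k_decomposable k (alexander_dual I)"
proof -
  obtain G where I: "I = ideal_gen (xmon ` G)" and G: "\<forall>g\<in>G. squarefree_mon g \<and> mdeg g \<ge> 2"
    using assms by blast
  have "squarefree_mon g \<and> g \<noteq> 0" if "g \<in> G" for g
    using G that by (auto simp: mdeg_def)
  note \<Delta> = squarefree_monomial_ideal_eq_SR_ideal[OF I this]
  have "k_clean k I \<longleftrightarrow> k_decomposable_complex k (SR_complex I)"
    using k_clean_SR_ideal_iff[OF \<Delta>(1), where 'a='a] \<Delta>(2) by simp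
  also have "\<dots> \<longleftrightarrow> k_decomposable k (alexander_dual I)"
    using k_decomposable_SR_ideal_alex_dual_complex_iff[OF \<Delta>(1), where 'a='a]
    by (simp add: alexander_dual_def)
  finally show ?thesis .
qed

end
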